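(* Let $H=\bigcup_{j=1}^n(c_j,d_j)\subset\mathbb R$ with pairwise disjoint closed intervals $[c_j,d_j]$, let $\mathcal B$ be finite and $m\ge2$. Assume for each $\beta\in\mathcal B$: $b_\beta,\theta_\beta\in C^m(\bar H)$, $b_\beta>0$ on $\bar H$, $\theta_\beta(H)\subset H$; and there exist $\mu\ge1$ and $\kappa<1$ with $|\theta_\omega(x)-\theta_\omega(y)|\le\kappa|x-y|$ for all $\omega\in\mathcal B_\mu$, $x,y\in\bar H$. For $s>0$ let $v_s$ be the strictly positive, normalized $C^m$ eigenvector of $(L_sf)(x)=\sum_{\beta\in\mathcal B}[b_\beta(x)]^sf(\theta_\beta(x))$ (with eigenvalue $r(L_s)$). Let $\epsilon_0=1$ and $\epsilon_\nu=\sup\{|\theta_\omega(x)-\theta_\omega(y)|/|x-y|:\omega\in\mathcal B_\nu,x,y\in H,x\ne y\}$ for $\nu\ge1$, and let $C_1=\sup\{|Db_\beta(x)|/b_\beta(x):\beta\in\mathcal B,x\in H\}$, $C_2=\sup\{|D^2b_\beta(x)|/b_\beta(x):\beta\in\mathcal B,x\in H\}$, $M_0=\sup\{|D^2\theta_\beta(x)|:\beta\in\mathcal B,x\in\bar H\}$. Then for all $x\in\bar H$, $$\frac{D^2v_s(x)}{v_s(x)}\le s^2C_1^2\Big(\sum_{k=0}^\infty\epsilon_k\Big)^2+s\Big(\sum_{k=0}^\infty\epsilon_k^2\Big)\Big[C_2+C_1M_0\sum_{k=0}^\infty\epsilon_k\Big]$$ and $$\frac{D^2v_s(x)}{v_s(x)}\ge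 -s\Big(\sum_{k=0}^\infty\epsilon_k^2\Big)\Big[(C_2+C_1^2)+C_1M_0\sum_{k=0}^\infty\epsilon_k\Big].$$
   Context: $D=d/dx$. $\mathcal B_\nu=\{(j_1,\ldots,j_\nu):j_k\in\mathcal B\}$ and $\theta_{(j_1,\ldots,j_\nu)}=\theta_{j_\nu}\circ\cdots\circ\theta_{j_1}$. $C^m(\bar H)$ denotes real $C^m$ functions on $H$ whose derivatives of order $\le m$ extend continuously to $\bar H$. Under these hypotheses $L_s$ acting on $C^m(\bar H)$ has a strictly positive $C^m$ eigenvector, unique up to positive multiples, with eigenvalue $r(L_s)>0$. *)

theory Defs
  imports "HOL-Analysis.Analysis"
begin

text \<open>C^m(closure H): f is C^m on the open set H and its derivatives of order \<le> m
  extend continuously to closure H.\<close>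
definition Cm_closure :: "nat \<Rightarrow> real set \<Rightarrow> (real \<Rightarrow> real) \<Rightarrow> (nat \<Rightarrow> real \<Rightarrow> real) \<Rightarrow> bool" where
  "Cm_closure m H f Df \<longleftrightarrow>
     (\<forall>x\<in>closure H. Df 0 x = f x) \<and>
     (\<forall>k\<le>m. continuous_on (closure H) (Df k)) \<and>
     (\<forall>k<m. \<forall>x\<in>H. (Df k has_real_derivative Df (Suc k) x) (at x))"

text \<open>theta_word theta [j1,...,jnu] = theta jnu o ... o theta j1.\<close>
fun theta_word :: "('b \<Rightarrow> real \<Rightarrow> real) \<Rightarrow> 'b list \<Rightarrow> real \<Rightarrow> real" where
  "theta_word \<theta> [] = id"
| "theta_word \<theta> (j # \<omega>) = theta_word \<theta> \<omega> \<circ> \<theta> j"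

definition words :: "'b set \<Rightarrow> nat \<Rightarrow> 'b list set" where
  "words B \<nu> = {\<omega>. length \<omega> = \<nu> \<and> set \<omega> \<subseteq> B}"

definition eps_seq :: "'b set \<Rightarrow> ('b \<Rightarrow> real \<Rightarrow> real) \<Rightarrow> real set \<Rightarrow> nat \<Rightarrow> real" where
  "eps_seq B \<theta> H \<nu> = (if \<nu> = 0 then 1 else
     Sup {\<bar>theta_word \<theta> \<omega> x - theta_word \<theta> \<omega> y\<bar> / \<bar>x - y\<bar> | \<omega> x y.
            \<omega> \<in> words B \<nu> \<and> x \<in> H \<and> y \<in> H \<and> x \<noteq> y})"

end

theory Submission
  imports Defs
begin

text \<open>Write \<open>w = Dv/v\<close> and \<open>z = D\<^sup>2v/v\<close>. Differentiating the eigenvalue equation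
  \<open>\<lambda> v = \<Sum>\<^sub>\<beta> b\<^sub>\<beta>\<^sup>s \<cdot> v \<circ> \<theta>\<^sub>\<beta>\<close> and dividing by \<open>\<lambda> v\<close> expresses \<open>w(x)\<close> and \<open>z(x)\<close> as averages,
  with the probability weights \<open>p\<^sub>\<beta>(x) = b\<^sub>\<beta>(x)\<^sup>s v(\<theta>\<^sub>\<beta> x) / (\<lambda> v(x))\<close>, of expressions in \<open>w\<close> and \<open>z\<close>
  at the points \<open>\<theta>\<^sub>\<beta> x\<close>. Iterating \<open>N\<close> times writes \<open>z(x)\<close> as an average over the words \<open>\<omega>\<close> of
  length \<open>N\<close> of the second logarithmic derivative of \<open>b\<^sub>\<omega>\<^sup>s \<cdot> v \<circ> \<theta>\<^sub>\<omega>\<close>. The terms of it that still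
  involve \<open>v\<close> carry a factor \<open>\<theta>\<^sub>\<omega>'\<close> or \<open>\<theta>\<^sub>\<omega>''\<close>, of size at most \<open>\<epsilon>\<^sub>N\<close> resp. \<open>M\<^sub>0 \<Sum>\<^sub>l \<epsilon>\<^sub>l\<^sup>2 \<epsilon>\<^bsub>N-1-l\<^esub>\<close>,
  which tend to \<open>0\<close>; the others are bounded through the sums of \<open>\<epsilon>\<^sub>k\<close> and \<open>\<epsilon>\<^sub>k\<^sup>2\<close>. The sequence
  \<open>\<epsilon>\<close> is submultiplicative and the contraction hypothesis gives \<open>\<epsilon>\<^sub>\<mu> < 1\<close>, so it is summable.
  Finally the bounds pass from \<open>H\<close> to its closure by continuity.\<close>

section \<open>Words, derivatives along words and orbit sums\<close>

lemma theta_word_append: "theta_word \<theta> (u @ v) = theta_word \<theta> v \<circ> theta_word \<theta> u"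
  by (induction u) auto

lemma theta_word_snoc: "theta_word \<theta> (\<omega> @ [\<beta>]) x = \<theta> \<beta> (theta_word \<theta> \<omega> x)"
  by (simp add: theta_word_append)

lemma theta_word_mem:
  assumes "\<forall>\<beta>\<in>B. \<theta> \<beta> ` H \<subseteq> H" and "set \<omega> \<subseteq> B" and "x \<in> H"
  shows "theta_word \<theta> \<omega> x \<in> H"
  using assms(2,3) by (induction \<omega> arbitrary: x) (use assms(1) in auto)

lemma sum_prefixes_snoc:
  "(\<Sum>i<length (\<omega> @ [\<beta>]). f ((\<omega> @ [\<beta>]) ! i) (take i (\<omega> @ [\<beta>]))) = (\<Sum>i<length \<omega>. f (\<omega> ! i) (take i \<omega>)) + f \<beta> \<omega>"
  by (simp add: nth_append)

lemma prod_prefixes_snoc: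
  "(\<Prod>i<length (\<omega> @ [\<beta>]). f ((\<omega> @ [\<beta>]) ! i) (take i (\<omega> @ [\<beta>]))) = (\<Prod>i<length \<omega>. f (\<omega> ! i) (take i \<omega>)) * f \<beta> \<omega>"
  by (simp add: nth_append)

definition word_deriv :: "('b \<Rightarrow> real \<Rightarrow> real) \<Rightarrow> ('b \<Rightarrow> real \<Rightarrow> real) \<Rightarrow> 'b list \<Rightarrow> real \<Rightarrow> real" where
  "word_deriv \<theta> \<theta>1 \<omega> x = (\<Prod>i<length \<omega>. \<theta>1 (\<omega> ! i) (theta_word \<theta> (take i \<omega>) x))"

lemma word_deriv_Nil [simp]: "word_deriv \<theta> \<theta>1 [] x = 1"
  by (simp add: word_deriv_def)

lemma word_deriv_snoc:
  "word_deriv \<theta> \<theta>1 (\<omega> @ [\<beta>]) x = \<theta>1 \<beta> (theta_word \<theta> \<omega> x) * word_deriv \<theta> \<theta>1 \<omega> x"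
  unfolding word_deriv_def
  using prod_prefixes_snoc[of "\<lambda>\<beta> u. \<theta>1 \<beta> (theta_word \<theta> u x)" \<omega> \<beta>] by simp

definition word_deriv2 ::
    "('b \<Rightarrow> real \<Rightarrow> real) \<Rightarrow> ('b \<Rightarrow> real \<Rightarrow> real) \<Rightarrow> ('b \<Rightarrow> real \<Rightarrow> real) \<Rightarrow> 'b list \<Rightarrow> real \<Rightarrow> real" where
  "word_deriv2 \<theta> \<theta>1 \<theta>2 \<omega> x = (\<Sum>l<length \<omega>.
     \<theta>2 (\<omega> ! l) (theta_word \<theta> (take l \<omega>) x) * (word_deriv \<theta> \<theta>1 (take l \<omega>) x)\<^sup>2
     * word_deriv \<theta> \<theta>1 (drop (Suc l) \<omega>) (theta_word \<theta> (take (Suc l) \<omega>) x))"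

lemma word_deriv2_Nil [simp]: "word_deriv2 \<theta> \<theta>1 \<theta>2 [] x = 0"
  by (simp add: word_deriv2_def)

lemma word_deriv2_snoc:
  "word_deriv2 \<theta> \<theta>1 \<theta>2 (\<omega> @ [\<beta>]) x =
     \<theta>2 \<beta> (theta_word \<theta> \<omega> x) * (word_deriv \<theta> \<theta>1 \<omega> x)\<^sup>2 + \<theta>1 \<beta> (theta_word \<theta> \<omega> x) * word_deriv2 \<theta> \<theta>1 \<theta>2 \<omega> x"
proof -
  let ?f = "\<lambda>\<omega> l. \<theta>2 (\<omega> ! l) (theta_word \<theta> (take l \<omega>) x) * (word_deriv \<theta> \<theta>1 (take l \<omega>) x)\<^sup>2
      * word_deriv \<theta> \<theta>1 (drop (Suc l) \<omega>) (theta_word \<theta> (take (Suc l) \<omega>) x)"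
  have "?f (\<omega> @ [\<beta>]) l = \<theta>1 \<beta> (theta_word \<theta> \<omega> x) * ?f \<omega> l" if "l < length \<omega>" for l
  proof -
    have "theta_word \<theta> (drop (Suc l) \<omega>) (theta_word \<theta> (take (Suc l) \<omega>) x) = theta_word \<theta> \<omega> x"
      using theta_word_append[of \<theta> "take (Suc l) \<omega>" "drop (Suc l) \<omega>"] by simp
    then show ?thesis using that by (simp add: word_deriv_snoc nth_append)
  qed
  then have "(\<Sum>l<length \<omega>. ?f (\<omega> @ [\<beta>]) l) = \<theta>1 \<beta> (theta_word \<theta> \<omega> x) * word_deriv2 \<theta> \<theta>1 \<theta>2 \<omega> x"
    unfolding word_deriv2_def sum_distrib_left by (intro sum.cong) auto
  moreover have "word_deriv2 \<theta> \<theta>1 \<theta>2 (\<omega> @ [\<beta>]) x = (\<Sum>l<length \<omega>. ?f (\<omega> @ [\<beta>]) l) + ?f (\<omega> @ [\<beta>]) (length \<omega>)"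
    by (simp add: word_deriv2_def)
  ultimately show ?thesis by simp
qed

text \<open>If \<open>A\<^sub>\<beta>' = a \<beta>\<close> and \<open>A\<^sub>\<beta>'' = g \<beta>\<close>, then \<open>orbit_sum\<close> and \<open>orbit_sum2\<close> are the first two
  derivatives of \<open>x \<mapsto> \<Sum>\<^sub>i A\<^bsub>\<omega>\<^sub>i\<^esub> (\<theta>\<^bsub>\<omega>\<^sub><\<^sub>i\<^esub> x)\<close>, just as \<open>word_deriv\<close> and \<open>word_deriv2\<close> are those
  of \<open>theta_word \<theta> \<omega>\<close>.\<close>

definition orbit_sum ::
    "('b \<Rightarrow> real \<Rightarrow> real) \<Rightarrow> ('b \<Rightarrow> real \<Rightarrow> real) \<Rightarrow> ('b \<Rightarrow> real \<Rightarrow> real) \<Rightarrow> 'b list \<Rightarrow> real \<Rightarrow> real" where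
  "orbit_sum \<theta> \<theta>1 a \<omega> x =
     (\<Sum>i<length \<omega>. a (\<omega> ! i) (theta_word \<theta> (take i \<omega>) x) * word_deriv \<theta> \<theta>1 (take i \<omega>) x)"

definition orbit_sum2 ::
    "('b \<Rightarrow> real \<Rightarrow> real) \<Rightarrow> ('b \<Rightarrow> real \<Rightarrow> real) \<Rightarrow> ('b \<Rightarrow> real \<Rightarrow> real) \<Rightarrow> ('b \<Rightarrow> real \<Rightarrow> real)
      \<Rightarrow> ('b \<Rightarrow> real \<Rightarrow> real) \<Rightarrow> 'b list \<Rightarrow> real \<Rightarrow> real" where
  "orbit_sum2 \<theta> \<theta>1 \<theta>2 a g \<omega> x = (\<Sum>i<length \<omega>.
     g (\<omega> ! i) (theta_word \<theta> (take i \<omega>) x) * (word_deriv \<theta> \<theta>1 (take i \<omega>) x)\<^sup>2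
     + a (\<omega> ! i) (theta_word \<theta> (take i \<omega>) x) * word_deriv2 \<theta> \<theta>1 \<theta>2 (take i \<omega>) x)"

lemma orbit_sum_Nil [simp]: "orbit_sum \<theta> \<theta>1 a [] x = 0"
  by (simp add: orbit_sum_def)

lemma orbit_sum2_Nil [simp]: "orbit_sum2 \<theta> \<theta>1 \<theta>2 a g [] x = 0"
  by (simp add: orbit_sum2_def)

lemma orbit_sum_snoc:
  "orbit_sum \<theta> \<theta>1 a (\<omega> @ [\<beta>]) x = orbit_sum \<theta> \<theta>1 a \<omega> x + a \<beta> (theta_word \<theta> \<omega> x) * word_deriv \<theta> \<theta>1 \<omega> x"
  unfolding orbit_sum_def
  using sum_prefixes_snoc[of "\<lambda>\<beta> u. a \<beta> (theta_word \<theta> u x) * word_deriv \<theta> \<theta>1 u x" \<omega> \<beta>] by simp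

lemma orbit_sum2_snoc:
  "orbit_sum2 \<theta> \<theta>1 \<theta>2 a g (\<omega> @ [\<beta>]) x = orbit_sum2 \<theta> \<theta>1 \<theta>2 a g \<omega> x
     + g \<beta> (theta_word \<theta> \<omega> x) * (word_deriv \<theta> \<theta>1 \<omega> x)\<^sup>2 + a \<beta> (theta_word \<theta> \<omega> x) * word_deriv2 \<theta> \<theta>1 \<theta>2 \<omega> x"
  unfolding orbit_sum2_def
  using sum_prefixes_snoc[of "\<lambda>\<beta> u. g \<beta> (theta_word \<theta> u x) * (word_deriv \<theta> \<theta>1 u x)\<^sup>2
      + a \<beta> (theta_word \<theta> u x) * word_deriv2 \<theta> \<theta>1 \<theta>2 u x" \<omega> \<beta>] by simp

lemma has_real_derivative_theta_word:
  assumes maps: "\<forall>\<beta>\<in>B. \<theta> \<beta> ` H \<subseteq> H"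
    and deriv: "\<And>\<beta> y. \<beta> \<in> B \<Longrightarrow> y \<in> H \<Longrightarrow> (\<theta> \<beta> has_real_derivative \<theta>1 \<beta> y) (at y)"
    and "set \<omega> \<subseteq> B" and x: "x \<in> H"
  shows "(theta_word \<theta> \<omega> has_real_derivative word_deriv \<theta> \<theta>1 \<omega> x) (at x)"
  using \<open>set \<omega> \<subseteq> B\<close>
proof (induction \<omega> rule: rev_induct)
  case Nil
  then show ?case by (simp add: id_def)
next
  case (snoc \<beta> \<omega>)
  then have "\<beta> \<in> B" and \<omega>: "set \<omega> \<subseteq> B" by auto
  with theta_word_mem[OF maps \<omega> x] have "(\<theta> \<beta> \<circ> theta_word \<theta> \<omega> has_real_derivative
      \<theta>1 \<beta> (theta_word \<theta> \<omega> x) * word_deriv \<theta> \<theta>1 \<omega> x) (at x)"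
    using DERIV_chain deriv snoc.IH by blast
  then show ?case by (simp add: theta_word_append word_deriv_snoc comp_def)
qed

section \<open>Summable sequences\<close>

lemma submultiplicative_le_power:
  fixes e :: "nat \<Rightarrow> real"
  assumes nonneg: "\<And>k. e k \<ge> 0" and submult: "\<And>i j. e (i + j) \<le> e i * e j"
  shows "e (q * \<mu> + i) \<le> e \<mu> ^ q * e i"
proof (induction q)
  case (Suc q)
  have "e (Suc q * \<mu> + i) \<le> e \<mu> * e (q * \<mu> + i)"
    using submult[of \<mu> "q * \<mu> + i"] by (simp add: algebra_simps)
  also have "\<dots> \<le> e \<mu> * (e \<mu> ^ q * e i)"
    using Suc nonneg by (intro mult_left_mono) auto
  finally show ?case by simp
qed simp

lemma summable_submultiplicative:
  fixes e :: "nat \<Rightarrow> real"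
  assumes nonneg: "\<And>k. e k \<ge> 0" and submult: "\<And>i j. e (i + j) \<le> e i * e j"
    and "\<mu> \<ge> 1" and "e \<mu> < 1"
  shows "summable e"
proof -
  define r where "r = max (e \<mu>) (1/2)"
  define \<rho> where "\<rho> = root \<mu> r"
  define S where "S = (\<Sum>i<\<mu>. e i)"
  have r: "0 < r" "r < 1" "e \<mu> \<le> r"
    using \<open>e \<mu> < 1\<close> by (auto simp: r_def)
  have \<rho>: "0 < \<rho>" "\<rho> < 1" "\<rho> ^ \<mu> = r"
    using r \<open>\<mu> \<ge> 1\<close> by (auto simp: \<rho>_def real_root_lt_1_iff)
  have bound: "e k \<le> (S / r) * \<rho> ^ k" for k
  proof -
    have "k mod \<mu> < \<mu>"
      using \<open>\<mu> \<ge> 1\<close> by simp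
    then have "k \<le> \<mu> * (k div \<mu>) + \<mu>"
      using mult_div_mod_eq[of \<mu> k] by linarith
    have "e k \<le> e \<mu> ^ (k div \<mu>) * e (k mod \<mu>)"
      using submultiplicative_le_power[OF nonneg submult, of "k div \<mu>" \<mu> "k mod \<mu>"] by simp
    also have "\<dots> \<le> r ^ (k div \<mu>) * S"
      unfolding S_def using \<open>k mod \<mu> < \<mu>\<close> nonneg r
      by (intro mult_mono power_mono member_le_sum) auto
    also have "\<dots> = \<rho> ^ (\<mu> * (k div \<mu>) + \<mu>) * (S / r)"
      using r by (simp add: power_add power_mult \<rho>(3))
    also have "\<dots> \<le> \<rho> ^ k * (S / r)"
      using \<rho> r \<open>k \<le> \<mu> * (k div \<mu>) + \<mu>\<close> nonneg unfolding S_def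
      by (intro mult_right_mono power_decreasing divide_nonneg_pos sum_nonneg) auto
    finally show ?thesis by (simp add: mult.commute)
  qed
  have "summable (\<lambda>k. (S / r) * \<rho> ^ k)"
    using \<rho> by (intro summable_mult summable_geometric) auto
  then show ?thesis
    by (rule summable_comparison_test'[where N = 0]) (use nonneg bound in auto)
qed

lemma summable_square_of_summable:
  fixes e :: "nat \<Rightarrow> real"
  assumes nonneg: "\<And>k. e k \<ge> 0" and "summable e"
  shows "summable (\<lambda>k. (e k)\<^sup>2)"
proof -
  have "eventually (\<lambda>k. e k < 1) sequentially"
    using summable_LIMSEQ_zero[OF \<open>summable e\<close>] by (rule order_tendstoD) simp
  then obtain N where "\<And>k. k \<ge> N \<Longrightarrow> e k < 1"
    by (auto simp: eventually_sequentially)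
  then have "norm ((e k)\<^sup>2) \<le> e k" if "k \<ge> N" for k
    using nonneg that by (simp add: power2_eq_square mult_left_le_one_le less_imp_le)
  with \<open>summable e\<close> show ?thesis
    by (rule summable_comparison_test')
qed

definition convolution :: "(nat \<Rightarrow> real) \<Rightarrow> (nat \<Rightarrow> real) \<Rightarrow> nat \<Rightarrow> real" where
  "convolution x y N = (\<Sum>l<N. x l * y (N - Suc l))"

lemma convolution_Suc: "convolution x y (Suc k) = (\<Sum>i\<le>k. x i * y (k - i))"
  by (simp add: convolution_def lessThan_Suc_atMost)

context
  fixes x y :: "nat \<Rightarrow> real"
  assumes x: "\<And>k. x k \<ge> 0" "summable x" and y: "\<And>k. y k \<ge> 0" "summable y"
begin

lemma Cauchy_product_sums_nonneg: "(\<lambda>k. \<Sum>i\<le>k. x i * y (k - i)) sums (suminf x * suminf y)"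
  using Cauchy_product_sums[of x y] x y by simp

lemma sum_convolution_le: "(\<Sum>i<N. convolution x y i) \<le> suminf x * suminf y"
proof (cases N)
  case 0
  then show ?thesis using x y by (simp add: suminf_nonneg)
next
  case (Suc M)
  have "(\<Sum>i<N. convolution x y i) = (\<Sum>k<M. \<Sum>i\<le>k. x i * y (k - i))"
    unfolding Suc sum.lessThan_Suc_shift convolution_Suc by (simp add: convolution_def)
  also have "\<dots> \<le> (\<Sum>k. \<Sum>i\<le>k. x i * y (k - i))"
    using Cauchy_product_sums_nonneg x y
    by (intro sum_le_suminf) (auto simp: sums_iff intro!: sum_nonneg)
  also have "\<dots> = suminf x * suminf y"
    using Cauchy_product_sums_nonneg by (simp add: sums_iff)
  finally show ?thesis .
qed

lemma convolution_tendsto_zero: "convolution x y \<longlonglongrightarrow> 0"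
proof -
  have "(\<lambda>k. convolution x y (Suc k)) \<longlonglongrightarrow> 0"
    unfolding convolution_Suc using Cauchy_product_sums_nonneg
    by (intro summable_LIMSEQ_zero) (auto simp: sums_iff)
  then show ?thesis by (rule LIMSEQ_imp_Suc)
qed

end

section \<open>The contraction coefficients\<close>

definition diff_quotients :: "'b set \<Rightarrow> ('b \<Rightarrow> real \<Rightarrow> real) \<Rightarrow> real set \<Rightarrow> nat \<Rightarrow> real set" where
  "diff_quotients B \<theta> H \<nu> = {\<bar>theta_word \<theta> \<omega> x - theta_word \<theta> \<omega> y\<bar> / \<bar>x - y\<bar> | \<omega> x y.
     \<omega> \<in> words B \<nu> \<and> x \<in> H \<and> y \<in> H \<and> x \<noteq> y}"

lemma eps_seq_eq_Sup: "\<nu> \<noteq> 0 \<Longrightarrow> eps_seq B \<theta> H \<nu> = Sup (diff_quotients B \<theta> H \<nu>)"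
  by (simp add: eps_seq_def diff_quotients_def)

lemma lipschitz_theta_word:
  assumes "finite B" and maps: "\<forall>\<beta>\<in>B. \<theta> \<beta> ` H \<subseteq> H"
    and lipschitz: "\<forall>\<beta>\<in>B. \<exists>L. \<forall>x\<in>H. \<forall>y\<in>H. \<bar>\<theta> \<beta> x - \<theta> \<beta> y\<bar> \<le> L * \<bar>x - y\<bar>"
  obtains L where "\<And>\<omega> x y. set \<omega> \<subseteq> B \<Longrightarrow> x \<in> H \<Longrightarrow> y \<in> H \<Longrightarrow>
    \<bar>theta_word \<theta> \<omega> x - theta_word \<theta> \<omega> y\<bar> \<le> L ^ length \<omega> * \<bar>x - y\<bar>"
proof -
  obtain Lf where Lf: "\<And>\<beta> x y. \<beta> \<in> B \<Longrightarrow> x \<in> H \<Longrightarrow> y \<in> H \<Longrightarrow> \<bar>\<theta> \<beta> x - \<theta> \<beta> y\<bar> \<le> Lf \<beta> * \<bar>x - y\<bar>"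
    using lipschitz by metis
  define L where "L = (\<Sum>\<beta>\<in>B. \<bar>Lf \<beta>\<bar>)"
  have L_nonneg: "L \<ge> 0"
    unfolding L_def by (simp add: sum_nonneg)
  have L: "\<bar>\<theta> \<beta> x - \<theta> \<beta> y\<bar> \<le> L * \<bar>x - y\<bar>" if "\<beta> \<in> B" "x \<in> H" "y \<in> H" for \<beta> x y
  proof -
    have "Lf \<beta> \<le> L"
      unfolding L_def using member_le_sum[of \<beta> B "\<lambda>\<beta>. \<bar>Lf \<beta>\<bar>"] \<open>finite B\<close> that(1) by auto
    then show ?thesis
      using Lf[OF that] by (meson abs_ge_zero mult_right_mono order_trans)
  qed
  have "\<bar>theta_word \<theta> \<omega> x - theta_word \<theta> \<omega> y\<bar> \<le> L ^ length \<omega> * \<bar>x - y\<bar>"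
    if "set \<omega> \<subseteq> B" "x \<in> H" "y \<in> H" for \<omega> x y
    using that
  proof (induction \<omega> arbitrary: x y)
    case Nil
    then show ?case by simp
  next
    case (Cons \<beta> \<omega>)
    then have "\<theta> \<beta> x \<in> H" "\<theta> \<beta> y \<in> H"
      using maps by (auto simp: image_subset_iff)
    with Cons have "\<bar>theta_word \<theta> (\<beta> # \<omega>) x - theta_word \<theta> (\<beta> # \<omega>) y\<bar> \<le> L ^ length \<omega> * \<bar>\<theta> \<beta> x - \<theta> \<beta> y\<bar>"
      by simp
    also have "\<dots> \<le> L ^ length \<omega> * (L * \<bar>x - y\<bar>)"
      using Cons.prems L L_nonneg by (intro mult_left_mono) auto
    finally show ?case by (simp add: algebra_simps)
  qed
  then show ?thesis using that by blast
qed

context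
  fixes B :: "'b set" and \<theta> :: "'b \<Rightarrow> real \<Rightarrow> real" and H :: "real set"
  assumes finite: "finite B" and nonempty: "B \<noteq> {}"
    and two_points: "\<exists>x y. x \<in> H \<and> y \<in> H \<and> x \<noteq> y"
    and maps: "\<forall>\<beta>\<in>B. \<theta> \<beta> ` H \<subseteq> H"
    and lipschitz: "\<forall>\<beta>\<in>B. \<exists>L. \<forall>x\<in>H. \<forall>y\<in>H. \<bar>\<theta> \<beta> x - \<theta> \<beta> y\<bar> \<le> L * \<bar>x - y\<bar>"
begin

lemma bdd_above_diff_quotients: "bdd_above (diff_quotients B \<theta> H \<nu>)"
proof -
  obtain L where L: "\<And>\<omega> x y. set \<omega> \<subseteq> B \<Longrightarrow> x \<in> H \<Longrightarrow> y \<in> H \<Longrightarrow>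
      \<bar>theta_word \<theta> \<omega> x - theta_word \<theta> \<omega> y\<bar> \<le> L ^ length \<omega> * \<bar>x - y\<bar>"
    using lipschitz_theta_word[OF finite maps lipschitz] by blast
  have "q \<le> L ^ \<nu>" if "q \<in> diff_quotients B \<theta> H \<nu>" for q
  proof -
    from that obtain \<omega> x y where q: "q = \<bar>theta_word \<theta> \<omega> x - theta_word \<theta> \<omega> y\<bar> / \<bar>x - y\<bar>"
      and \<omega>: "\<omega> \<in> words B \<nu>" and "x \<in> H" "y \<in> H" "x \<noteq> y"
      unfolding diff_quotients_def by blast
    with L[of \<omega> x y] show ?thesis
      by (auto simp: words_def divide_le_eq)
  qed
  then show ?thesis by (rule bdd_aboveI)
qed

lemma diff_quotients_nonempty: "diff_quotients B \<theta> H \<nu> \<noteq> {}"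
proof -
  obtain \<beta> where "\<beta> \<in> B" using nonempty by blast
  then have "replicate \<nu> \<beta> \<in> words B \<nu>" by (auto simp: words_def)
  with two_points show ?thesis unfolding diff_quotients_def by blast
qed

lemma diff_quotient_le_eps_seq:
  assumes "\<omega> \<in> words B \<nu>" "x \<in> H" "y \<in> H" "x \<noteq> y"
  shows "\<bar>theta_word \<theta> \<omega> x - theta_word \<theta> \<omega> y\<bar> / \<bar>x - y\<bar> \<le> eps_seq B \<theta> H \<nu>"
proof (cases "\<nu> = 0")
  case True
  with assms show ?thesis by (simp add: words_def eps_seq_def)
next
  case False
  with assms show ?thesis
    unfolding eps_seq_eq_Sup[OF False] diff_quotients_def
    by (intro cSup_upper bdd_above_diff_quotients[unfolded diff_quotients_def]) blast
qed

lemma eps_seq_nonneg: "eps_seq B \<theta> H \<nu> \<ge> 0"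
proof -
  obtain q where q: "q \<in> diff_quotients B \<theta> H \<nu>"
    using diff_quotients_nonempty by blast
  then obtain \<omega> x y where "\<omega> \<in> words B \<nu>" "x \<in> H" "y \<in> H" "x \<noteq> y"
    unfolding diff_quotients_def by blast
  from diff_quotient_le_eps_seq[OF this] show ?thesis
    by (meson abs_ge_zero divide_nonneg_nonneg order_trans)
qed

lemma eps_seq_add_le: "eps_seq B \<theta> H (i + j) \<le> eps_seq B \<theta> H i * eps_seq B \<theta> H j"
proof (cases "i = 0 \<or> j = 0")
  case True
  then show ?thesis by (auto simp: eps_seq_def)
next
  case False
  have "q \<le> eps_seq B \<theta> H i * eps_seq B \<theta> H j" if "q \<in> diff_quotients B \<theta> H (i + j)" for q
  proof -
    from that obtain \<omega> x y where q: "q = \<bar>theta_word \<theta> \<omega> x - theta_word \<theta> \<omega> y\<bar> / \<bar>x - y\<bar>"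
      and \<omega>: "\<omega> \<in> words B (i + j)" and xy: "x \<in> H" "y \<in> H" "x \<noteq> y"
      unfolding diff_quotients_def by blast
    define u where "u = take i \<omega>"
    define u' where "u' = drop i \<omega>"
    have u: "u \<in> words B i" and u': "u' \<in> words B j"
      using \<omega> set_take_subset[of i \<omega>] set_drop_subset[of i \<omega>] by (auto simp: words_def u_def u'_def)
    have split: "theta_word \<theta> \<omega> = theta_word \<theta> u' \<circ> theta_word \<theta> u"
      using theta_word_append[of \<theta> u u'] by (simp add: u_def u'_def)
    let ?X = "theta_word \<theta> u x" and ?Y = "theta_word \<theta> u y"
    have XY: "?X \<in> H" "?Y \<in> H"
      using theta_word_mem[OF maps _ xy(1)] theta_word_mem[OF maps _ xy(2)] u by (auto simp: words_def)
    show ?thesis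
    proof (cases "?X = ?Y")
      case True
      then show ?thesis
        unfolding q split using eps_seq_nonneg[of i] eps_seq_nonneg[of j] by simp
    next
      case False
      have "q = (\<bar>theta_word \<theta> u' ?X - theta_word \<theta> u' ?Y\<bar> / \<bar>?X - ?Y\<bar>) * (\<bar>?X - ?Y\<bar> / \<bar>x - y\<bar>)"
        unfolding q split using False by simp
      also have "\<dots> \<le> eps_seq B \<theta> H j * eps_seq B \<theta> H i"
        by (intro mult_mono diff_quotient_le_eps_seq u u' XY xy False eps_seq_nonneg) simp
      finally show ?thesis by (simp add: mult.commute)
    qed
  qed
  moreover have "i + j \<noteq> 0"
    using False by simp
  ultimately show ?thesis
    by (simp only: eps_seq_eq_Sup[OF \<open>i + j \<noteq> 0\<close>]) (intro cSup_least diff_quotients_nonempty)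
qed

lemma eps_seq_le_contraction:
  assumes "\<mu> \<ge> 1" and "H \<subseteq> C"
    and "\<forall>\<omega>\<in>words B \<mu>. \<forall>x\<in>C. \<forall>y\<in>C. \<bar>theta_word \<theta> \<omega> x - theta_word \<theta> \<omega> y\<bar> \<le> \<kappa> * \<bar>x - y\<bar>"
  shows "eps_seq B \<theta> H \<mu> \<le> \<kappa>"
proof -
  have "q \<le> \<kappa>" if "q \<in> diff_quotients B \<theta> H \<mu>" for q
  proof -
    from that obtain \<omega> x y where q: "q = \<bar>theta_word \<theta> \<omega> x - theta_word \<theta> \<omega> y\<bar> / \<bar>x - y\<bar>"
      and "\<omega> \<in> words B \<mu>" "x \<in> H" "y \<in> H" "x \<noteq> y"
      unfolding diff_quotients_def by blast
    with assms(2,3) show ?thesis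
      by (auto simp: divide_le_eq mult.commute)
  qed
  moreover have "\<mu> \<noteq> 0"
    using assms(1) by simp
  ultimately show ?thesis
    by (simp only: eps_seq_eq_Sup[OF \<open>\<mu> \<noteq> 0\<close>]) (intro cSup_least diff_quotients_nonempty)
qed

lemma eps_seq_summable:
  assumes "\<mu> \<ge> 1" and "\<kappa> < 1" and "H \<subseteq> C"
    and "\<forall>\<omega>\<in>words B \<mu>. \<forall>x\<in>C. \<forall>y\<in>C. \<bar>theta_word \<theta> \<omega> x - theta_word \<theta> \<omega> y\<bar> \<le> \<kappa> * \<bar>x - y\<bar>"
  shows "summable (eps_seq B \<theta> H)"
  using eps_seq_le_contraction[OF assms(1,3,4)] assms(2)
  by (intro summable_submultiplicative[OF eps_seq_nonneg eps_seq_add_le assms(1)]) simp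

lemma abs_word_deriv_le_eps_seq:
  assumes "open H"
    and deriv: "\<And>\<beta> y. \<beta> \<in> B \<Longrightarrow> y \<in> H \<Longrightarrow> (\<theta> \<beta> has_real_derivative \<theta>1 \<beta> y) (at y)"
    and \<omega>: "set \<omega> \<subseteq> B" and x: "x \<in> H"
  shows "\<bar>word_deriv \<theta> \<theta>1 \<omega> x\<bar> \<le> eps_seq B \<theta> H (length \<omega>)"
proof -
  let ?q = "\<lambda>y. \<bar>(theta_word \<theta> \<omega> y - theta_word \<theta> \<omega> x) / (y - x)\<bar>"
  have "(theta_word \<theta> \<omega> has_real_derivative word_deriv \<theta> \<theta>1 \<omega> x) (at x)"
    by (rule has_real_derivative_theta_word[OF maps deriv \<omega> x])
  then have "(?q \<longlongrightarrow> \<bar>word_deriv \<theta> \<theta>1 \<omega> x\<bar>) (at x)"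
    by (intro tendsto_rabs) (simp add: has_field_derivative_iff)
  moreover have "eventually (\<lambda>y. ?q y \<le> eps_seq B \<theta> H (length \<omega>)) (at x)"
    using eventually_at_in_open'[OF \<open>open H\<close> x] eventually_neq_at_within[of x x UNIV]
  proof eventually_elim
    case (elim y)
    with \<omega> x show ?case
      using diff_quotient_le_eps_seq[of \<omega> "length \<omega>" y x] by (simp add: words_def abs_divide)
  qed
  ultimately show ?thesis
    by (rule tendsto_upperbound) simp
qed

end

section \<open>Functions on finite unions of separated intervals\<close>

lemma separated_intervals_gap:
  fixes c d :: "nat \<Rightarrow> real"
  assumes cd: "\<forall>j<n. c j < d j"
    and disj: "\<forall>i<n. \<forall>j<n. i \<noteq> j \<longrightarrow> {c i..d i} \<inter> {c j..d j} = {}"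
  obtains \<delta> where "\<delta> > 0"
    and "\<And>i j x y. i < n \<Longrightarrow> j < n \<Longrightarrow> i \<noteq> j \<Longrightarrow> x \<in> {c i<..<d i} \<Longrightarrow> y \<in> {c j<..<d j} \<Longrightarrow> \<delta> \<le> \<bar>x - y\<bar>"
proof -
  define gap where "gap i j = (if d i < c j then c j - d i else c i - d j)" for i j
  define pairs where "pairs = {(i, j). i < n \<and> j < n \<and> i \<noteq> j}"
  define \<delta> where "\<delta> = Min (insert 1 ((\<lambda>(i, j). gap i j) ` pairs))"
  have sep: "d i < c j \<or> d j < c i" if "i < n" "j < n" "i \<noteq> j" for i j
  proof (rule ccontr)
    assume "\<not> (d i < c j \<or> d j < c i)"
    then have "max (c i) (c j) \<in> {c i..d i} \<inter> {c j..d j}"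
      using cd that by auto
    with disj that show False by auto
  qed
  have "finite pairs"
    unfolding pairs_def by (rule finite_subset[of _ "{..<n} \<times> {..<n}"]) auto
  moreover have "gap i j > 0" if "(i, j) \<in> pairs" for i j
    using sep that unfolding gap_def pairs_def by auto
  ultimately have "\<delta> > 0"
    unfolding \<delta>_def by auto
  moreover have "\<delta> \<le> \<bar>x - y\<bar>"
    if "i < n" "j < n" "i \<noteq> j" "x \<in> {c i<..<d i}" "y \<in> {c j<..<d j}" for i j x y
  proof -
    have "\<delta> \<le> gap i j"
      unfolding \<delta>_def using \<open>finite pairs\<close> that(1-3) by (intro Min_le) (auto simp: pairs_def)
    also have "\<dots> \<le> \<bar>x - y\<bar>"
      using sep[OF that(1-3)] that(4,5) unfolding gap_def by auto
    finally show ?thesis .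
  qed
  ultimately show ?thesis using that by blast
qed

lemma lipschitz_on_separated_intervals:
  fixes c d :: "nat \<Rightarrow> real" and f f' :: "real \<Rightarrow> real"
  assumes cd: "\<forall>j<n. c j < d j"
    and disj: "\<forall>i<n. \<forall>j<n. i \<noteq> j \<longrightarrow> {c i..d i} \<inter> {c j..d j} = {}"
    and H: "H = (\<Union>j<n. {c j<..<d j})"
    and f_bound: "\<And>x. x \<in> H \<Longrightarrow> \<bar>f x\<bar> \<le> M"
    and f'_bound: "\<And>x. x \<in> H \<Longrightarrow> \<bar>f' x\<bar> \<le> K"
    and deriv: "\<And>x. x \<in> H \<Longrightarrow> (f has_real_derivative f' x) (at x)"
  shows "\<exists>L. \<forall>x\<in>H. \<forall>y\<in>H. \<bar>f x - f y\<bar> \<le> L * \<bar>x - y\<bar>"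
proof -
  obtain \<delta> where "\<delta> > 0" and gap: "\<And>i j x y. i < n \<Longrightarrow> j < n \<Longrightarrow> i \<noteq> j \<Longrightarrow>
      x \<in> {c i<..<d i} \<Longrightarrow> y \<in> {c j<..<d j} \<Longrightarrow> \<delta> \<le> \<bar>x - y\<bar>"
    using separated_intervals_gap[OF cd disj] by blast
  define L where "L = \<bar>K\<bar> + 2 * \<bar>M\<bar> / \<delta>"
  have "\<bar>f x - f y\<bar> \<le> L * \<bar>x - y\<bar>" if x: "x \<in> H" and y: "y \<in> H" for x y
  proof -
    obtain i j where i: "i < n" "x \<in> {c i<..<d i}" and j: "j < n" "y \<in> {c j<..<d j}"
      using x y H by auto
    show ?thesis
    proof (cases "i = j")
      case True
      have sub: "{c i<..<d i} \<subseteq> H"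
        using i H by auto
      then have "(f has_real_derivative f' z) (at z within {c i<..<d i})" if "z \<in> {c i<..<d i}" for z
        using deriv that by (blast intro: has_field_derivative_at_within)
      then have "norm (f x - f y) \<le> K * norm (x - y)"
        using i j True sub f'_bound by (intro field_differentiable_bound[of "{c i<..<d i}" f f' K]) auto
      also have "\<dots> \<le> L * \<bar>x - y\<bar>"
      proof -
        have "0 \<le> 2 * \<bar>M\<bar> / \<delta>"
          using \<open>\<delta> > 0\<close> by simp
        then have "K \<le> L"
          unfolding L_def using abs_ge_self[of K] by linarith
        then show ?thesis by (simp add: mult_right_mono)
      qed
      finally show ?thesis by simp
    next
      case False
      have "\<bar>f x - f y\<bar> \<le> 2 * \<bar>M\<bar>"
        using f_bound[OF x] f_bound[OF y] by linarith
      also have "\<dots> = (2 * \<bar>M\<bar> / \<delta>) * \<delta>"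
        using \<open>\<delta> > 0\<close> by simp
      also have "\<dots> \<le> L * \<bar>x - y\<bar>"
        unfolding L_def using gap[OF i(1) j(1) False i(2) j(2)] \<open>\<delta> > 0\<close> by (intro mult_mono) auto
      finally show ?thesis .
    qed
  qed
  then show ?thesis by blast
qed

lemma union_of_intervals_facts:
  fixes c d :: "nat \<Rightarrow> real"
  assumes "n \<ge> 1" and "\<forall>j<n. c j < d j" and H: "H = (\<Union>j<n. {c j<..<d j})"
  shows "open H" and "compact (closure H)" and "\<exists>x y. x \<in> H \<and> y \<in> H \<and> x \<noteq> y"
proof -
  show "open H" unfolding H by auto
  show "compact (closure H)"
    unfolding H compact_closure by (intro bounded_UN) auto
  have "c 0 < d 0" and "{c 0<..<d 0} \<subseteq> H"
    using assms unfolding H by force+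
  then show "\<exists>x y. x \<in> H \<and> y \<in> H \<and> x \<noteq> y"
    by (intro exI[of _ "(2 * c 0 + d 0) / 3"] exI[of _ "(c 0 + 2 * d 0) / 3"]) auto
qed

lemma Cm_closure_derivatives:
  assumes f: "Cm_closure m H f Df" and "open H" and "2 \<le> m" and y: "y \<in> H"
  shows "(f has_real_derivative Df 1 y) (at y)" and "(Df 1 has_real_derivative Df 2 y) (at y)"
proof -
  have D: "(Df k has_real_derivative Df (Suc k) y) (at y)" if "k < m" for k
    using f y that by (simp add: Cm_closure_def)
  show "(Df 1 has_real_derivative Df 2 y) (at y)"
    using D[of 1] \<open>2 \<le> m\<close> by (simp add: numeral_2_eq_2)
  have "(Df 0 has_real_derivative Df 1 y) (at y)"
    using D[of 0] \<open>2 \<le> m\<close> by simp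
  moreover have "Df 0 x = f x" if "x \<in> H" for x
    using f closure_subset that unfolding Cm_closure_def by blast
  ultimately show "(f has_real_derivative Df 1 y) (at y)"
    by (rule has_field_derivative_transform_within_open[OF _ \<open>open H\<close> y])
qed

lemma Cm_closure_continuous:
  "Cm_closure m H f Df \<Longrightarrow> k \<le> m \<Longrightarrow> continuous_on (closure H) (Df k)"
  unfolding Cm_closure_def by blast

lemma Cm_closure_continuous_ratio:
  assumes f: "Cm_closure m H f Df" and "k \<le> m" and pos: "\<And>x. x \<in> closure H \<Longrightarrow> 0 < f x"
  shows "continuous_on (closure H) (\<lambda>x. Df k x / Df 0 x)"
proof -
  have "Df 0 x \<noteq> 0" if "x \<in> closure H" for x
    using f pos[OF that] that by (simp add: Cm_closure_def)
  then show ?thesis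
    using f \<open>k \<le> m\<close> unfolding Cm_closure_def by (intro continuous_intros) auto
qed

lemma Cm_closure_ratio_bounded:
  assumes f: "Cm_closure m H f Df" and "compact (closure H)" and "k \<le> m"
    and pos: "\<And>x. x \<in> closure H \<Longrightarrow> 0 < f x"
  shows "\<exists>M. \<forall>x\<in>closure H. \<bar>Df k x / f x\<bar> \<le> M"
proof -
  obtain M where M: "\<And>x. x \<in> closure H \<Longrightarrow> norm (Df k x / Df 0 x) \<le> M"
    using continuous_on_compact_bound[OF \<open>compact (closure H)\<close> Cm_closure_continuous_ratio[OF f \<open>k \<le> m\<close> pos]]
    by blast
  have "\<bar>Df k x / f x\<bar> \<le> M" if "x \<in> closure H" for x
    using M[OF that] f that by (simp add: Cm_closure_def)
  then show ?thesis by blast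
qed

lemma le_Sup_family:
  fixes F :: "'b \<Rightarrow> 'a \<Rightarrow> real"
  assumes "finite B" and bounded: "\<And>\<beta>. \<beta> \<in> B \<Longrightarrow> \<exists>M. \<forall>x\<in>S. F \<beta> x \<le> M"
    and "\<beta> \<in> B" and "x \<in> S"
  shows "F \<beta> x \<le> Sup {F \<beta> x | \<beta> x. \<beta> \<in> B \<and> x \<in> S}"
proof -
  have eq: "{F \<beta> x | \<beta> x. \<beta> \<in> B \<and> x \<in> S} = (\<Union>\<beta>\<in>B. F \<beta> ` S)"
    by auto
  have "bdd_above (F \<beta> ` S)" if "\<beta> \<in> B" for \<beta>
    using bounded[OF that] by (auto simp: bdd_above_def)
  then have "bdd_above (\<Union>\<beta>\<in>B. F \<beta> ` S)"
    using \<open>finite B\<close> by simp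
  then show ?thesis
    unfolding eq by (rule cSup_upper[rotated]) (use assms(3,4) in blast)
qed

lemma Cm_closure_lipschitz_on_intervals:
  fixes c d :: "nat \<Rightarrow> real"
  assumes cd: "\<forall>j<n. c j < d j"
    and disj: "\<forall>i<n. \<forall>j<n. i \<noteq> j \<longrightarrow> {c i..d i} \<inter> {c j..d j} = {}"
    and H: "H = (\<Union>j<n. {c j<..<d j})" and "compact (closure H)"
    and f: "Cm_closure m H f Df" and "2 \<le> m"
  shows "\<exists>L. \<forall>x\<in>H. \<forall>y\<in>H. \<bar>f x - f y\<bar> \<le> L * \<bar>x - y\<bar>"
proof -
  have "open H" unfolding H by auto
  have "continuous_on (closure H) (Df 0)" and "continuous_on (closure H) (Df 1)"
    using Cm_closure_continuous[OF f] \<open>2 \<le> m\<close> by simp_all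
  then obtain M K where M: "\<And>x. x \<in> closure H \<Longrightarrow> \<bar>Df 0 x\<bar> \<le> M"
    and K: "\<And>x. x \<in> closure H \<Longrightarrow> \<bar>Df 1 x\<bar> \<le> K"
    using continuous_on_compact_bound[OF \<open>compact (closure H)\<close>] real_norm_def by metis
  have "\<bar>f x\<bar> \<le> M" if "x \<in> H" for x
    using M[of x] f closure_subset that by (auto simp: Cm_closure_def)
  with K closure_subset show ?thesis
    by (intro lipschitz_on_separated_intervals[OF cd disj H, of f M "Df 1" K]
        Cm_closure_derivatives(1)[OF f \<open>open H\<close> \<open>2 \<le> m\<close>]) auto
qed

lemma convex_combination_bounds:
  fixes p f :: "'b \<Rightarrow> real"
  assumes "\<And>\<beta>. \<beta> \<in> B \<Longrightarrow> p \<beta> \<ge> 0" and "(\<Sum>\<beta>\<in>B. p \<beta>) = 1"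
    and "\<And>\<beta>. \<beta> \<in> B \<Longrightarrow> L \<le> f \<beta> \<and> f \<beta> \<le> R"
  shows "L \<le> (\<Sum>\<beta>\<in>B. p \<beta> * f \<beta>) \<and> (\<Sum>\<beta>\<in>B. p \<beta> * f \<beta>) \<le> R"
proof
  have "L = (\<Sum>\<beta>\<in>B. p \<beta> * L)"
    using assms(2) by (simp add: sum_distrib_right[symmetric])
  also have "\<dots> \<le> (\<Sum>\<beta>\<in>B. p \<beta> * f \<beta>)"
    using assms(1,3) by (intro sum_mono mult_left_mono) auto
  finally show "L \<le> (\<Sum>\<beta>\<in>B. p \<beta> * f \<beta>)" .
  have "(\<Sum>\<beta>\<in>B. p \<beta> * f \<beta>) \<le> (\<Sum>\<beta>\<in>B. p \<beta> * R)"
    using assms(1,3) by (intro sum_mono mult_left_mono) auto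
  also have "\<dots> = R"
    using assms(2) by (simp add: sum_distrib_right[symmetric])
  finally show "(\<Sum>\<beta>\<in>B. p \<beta> * f \<beta>) \<le> R" .
qed

lemma averaging_recursion_bounds:
  fixes Q :: "'b list \<Rightarrow> real" and P :: "'b list \<Rightarrow> 'b \<Rightarrow> real"
  assumes nonneg: "\<And>\<omega> \<beta>. set \<omega> \<subseteq> B \<Longrightarrow> \<beta> \<in> B \<Longrightarrow> P \<omega> \<beta> \<ge> 0"
    and sum_one: "\<And>\<omega>. set \<omega> \<subseteq> B \<Longrightarrow> (\<Sum>\<beta>\<in>B. P \<omega> \<beta>) = 1"
    and average: "\<And>\<omega>. set \<omega> \<subseteq> B \<Longrightarrow> Q \<omega> = (\<Sum>\<beta>\<in>B. P \<omega> \<beta> * Q (\<omega> @ [\<beta>]))"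
    and bounds: "\<And>\<omega>. \<omega> \<in> words B N \<Longrightarrow> L \<le> Q \<omega> \<and> Q \<omega> \<le> R"
  shows "L \<le> Q [] \<and> Q [] \<le> R"
proof -
  have "L \<le> Q \<omega> \<and> Q \<omega> \<le> R" if "length \<omega> + k = N" "set \<omega> \<subseteq> B" for k \<omega>
    using that
  proof (induction k arbitrary: \<omega>)
    case 0
    then show ?case using bounds by (simp add: words_def)
  next
    case (Suc k)
    then show ?case
      unfolding average[OF Suc.prems(2)] by (intro convex_combination_bounds nonneg sum_one Suc.IH) auto
  qed
  then show ?thesis by simp
qed

section \<open>Differentiating the eigenvalue equation\<close>

lemma derivative_of_sum_identity:
  fixes F :: "real \<Rightarrow> real" and u :: "'b \<Rightarrow> real \<Rightarrow> real"
  assumes "open H" and "x \<in> H" and "c \<noteq> 0"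
    and eq: "\<And>y. y \<in> H \<Longrightarrow> c * F y = (\<Sum>\<beta>\<in>B. u \<beta> y)"
    and F: "(F has_real_derivative F') (at x)"
    and u: "\<And>\<beta>. \<beta> \<in> B \<Longrightarrow> (u \<beta> has_real_derivative u' \<beta>) (at x)"
  shows "c * F' = (\<Sum>\<beta>\<in>B. u' \<beta>)"
proof -
  have "((\<lambda>y. (\<Sum>\<beta>\<in>B. u \<beta> y) / c) has_real_derivative (\<Sum>\<beta>\<in>B. u' \<beta>) / c) (at x)"
    by (intro DERIV_cdivide DERIV_sum u)
  then have "(F has_real_derivative (\<Sum>\<beta>\<in>B. u' \<beta>) / c) (at x)"
    by (rule has_field_derivative_transform_within_open[OF _ \<open>open H\<close> \<open>x \<in> H\<close>])
      (use eq \<open>c \<noteq> 0\<close> in \<open>simp add: field_simps\<close>)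
  with F \<open>c \<noteq> 0\<close> show ?thesis
    using DERIV_unique by fastforce
qed

lemma has_real_derivative_powr_mult_comp:
  fixes b \<theta> v :: "real \<Rightarrow> real"
  assumes b: "(b has_real_derivative b') (at y)" and "0 < b y"
    and \<theta>: "(\<theta> has_real_derivative \<theta>') (at y)"
    and v: "(v has_real_derivative v') (at (\<theta> y))" and "0 < v (\<theta> y)"
  shows "((\<lambda>y. b y powr s * v (\<theta> y)) has_real_derivative
      b y powr s * v (\<theta> y) * (s * (b' / b y) + \<theta>' * (v' / v (\<theta> y)))) (at y)"
proof -
  have "((\<lambda>y. b y powr s * v (\<theta> y)) has_real_derivative
      s * b y powr (s - of_nat 1) * b' * v (\<theta> y) + b y powr s * (v' * \<theta>')) (at y)"
    by (rule DERIV_cong[OF DERIV_mult[OF DERIV_fun_powr[OF b \<open>0 < b y\<close>] DERIV_chain2[OF v \<theta>]]])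
      (simp add: algebra_simps)
  moreover have "s * b y powr (s - of_nat 1) * b' * v (\<theta> y) + b y powr s * (v' * \<theta>')
      = b y powr s * v (\<theta> y) * (s * (b' / b y) + \<theta>' * (v' / v (\<theta> y)))"
    using \<open>0 < b y\<close> \<open>0 < v (\<theta> y)\<close> by (simp add: powr_diff field_simps)
  ultimately show ?thesis by (rule DERIV_cong)
qed

lemma has_real_derivative_log_deriv_sum:
  fixes b b1 \<theta> \<theta>1 v v1 :: "real \<Rightarrow> real"
  assumes b: "(b has_real_derivative b1 y) (at y)" and b1: "(b1 has_real_derivative b2) (at y)" and "0 < b y"
    and \<theta>: "(\<theta> has_real_derivative \<theta>1 y) (at y)" and \<theta>1: "(\<theta>1 has_real_derivative \<theta>2) (at y)"
    and v: "(v has_real_derivative v1 (\<theta> y)) (at (\<theta> y))" and v1: "(v1 has_real_derivative v2) (at (\<theta> y))"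
    and "0 < v (\<theta> y)"
  shows "((\<lambda>y. s * (b1 y / b y) + \<theta>1 y * (v1 (\<theta> y) / v (\<theta> y))) has_real_derivative
      s * (b2 / b y - (b1 y / b y)\<^sup>2) + \<theta>2 * (v1 (\<theta> y) / v (\<theta> y))
      + (\<theta>1 y)\<^sup>2 * (v2 / v (\<theta> y) - (v1 (\<theta> y) / v (\<theta> y))\<^sup>2)) (at y)"
proof -
  let ?y = "\<theta> y"
  have "((\<lambda>y. b1 y / b y) has_real_derivative (b2 * b y - b1 y * b1 y) / (b y * b y)) (at y)"
    using DERIV_divide[OF b1 b] \<open>0 < b y\<close> by simp
  moreover have "((\<lambda>z. v1 z / v z) has_real_derivative (v2 * v ?y - v1 ?y * v1 ?y) / (v ?y * v ?y)) (at ?y)"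
    using DERIV_divide[OF v1 v] \<open>0 < v ?y\<close> by simp
  then have "((\<lambda>y. v1 (\<theta> y) / v (\<theta> y)) has_real_derivative
      (v2 * v ?y - v1 ?y * v1 ?y) / (v ?y * v ?y) * \<theta>1 y) (at y)"
    by (rule DERIV_chain2[OF _ \<theta>])
  ultimately have "((\<lambda>y. s * (b1 y / b y) + \<theta>1 y * (v1 (\<theta> y) / v (\<theta> y))) has_real_derivative
      s * ((b2 * b y - b1 y * b1 y) / (b y * b y))
      + (\<theta>2 * (v1 ?y / v ?y) + (v2 * v ?y - v1 ?y * v1 ?y) / (v ?y * v ?y) * \<theta>1 y * \<theta>1 y)) (at y)"
    by (intro DERIV_add DERIV_cmult DERIV_mult \<theta>1)
  moreover have "s * ((b2 * b y - b1 y * b1 y) / (b y * b y))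
      + (\<theta>2 * (v1 ?y / v ?y) + (v2 * v ?y - v1 ?y * v1 ?y) / (v ?y * v ?y) * \<theta>1 y * \<theta>1 y)
      = s * (b2 / b y - (b1 y / b y)\<^sup>2) + \<theta>2 * (v1 ?y / v ?y) + (\<theta>1 y)\<^sup>2 * (v2 / v ?y - (v1 ?y / v ?y)\<^sup>2)"
    using \<open>0 < b y\<close> \<open>0 < v ?y\<close> by (simp add: field_simps power2_eq_square)
  ultimately show ?thesis by (rule DERIV_cong)
qed

lemma log_derivatives_of_eigenfunction:
  fixes b b1 b2 \<theta> \<theta>1 \<theta>2 :: "'b \<Rightarrow> real \<Rightarrow> real" and v v1 v2 :: "real \<Rightarrow> real" and s lam :: real
  assumes "open H" and maps: "\<forall>\<beta>\<in>B. \<theta> \<beta> ` H \<subseteq> H"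
    and b_pos: "\<And>\<beta> y. \<beta> \<in> B \<Longrightarrow> y \<in> H \<Longrightarrow> b \<beta> y > 0"
    and db: "\<And>\<beta> y. \<beta> \<in> B \<Longrightarrow> y \<in> H \<Longrightarrow> (b \<beta> has_real_derivative b1 \<beta> y) (at y)"
    and db1: "\<And>\<beta> y. \<beta> \<in> B \<Longrightarrow> y \<in> H \<Longrightarrow> (b1 \<beta> has_real_derivative b2 \<beta> y) (at y)"
    and d\<theta>: "\<And>\<beta> y. \<beta> \<in> B \<Longrightarrow> y \<in> H \<Longrightarrow> (\<theta> \<beta> has_real_derivative \<theta>1 \<beta> y) (at y)"
    and d\<theta>1: "\<And>\<beta> y. \<beta> \<in> B \<Longrightarrow> y \<in> H \<Longrightarrow> (\<theta>1 \<beta> has_real_derivative \<theta>2 \<beta> y) (at y)"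
    and dv: "\<And>y. y \<in> H \<Longrightarrow> (v has_real_derivative v1 y) (at y)"
    and dv1: "\<And>y. y \<in> H \<Longrightarrow> (v1 has_real_derivative v2 y) (at y)"
    and v_pos: "\<And>y. y \<in> H \<Longrightarrow> v y > 0"
    and "lam \<noteq> 0"
    and eigen: "\<And>y. y \<in> H \<Longrightarrow> (\<Sum>\<beta>\<in>B. b \<beta> y powr s * v (\<theta> \<beta> y)) = lam * v y"
    and x: "x \<in> H"
  defines "p \<equiv> \<lambda>\<beta> y. b \<beta> y powr s * v (\<theta> \<beta> y) / (lam * v y)"
    and "a \<equiv> \<lambda>\<beta> y. b1 \<beta> y / b \<beta> y"
    and "w \<equiv> \<lambda>y. v1 y / v y" and "z \<equiv> \<lambda>y. v2 y / v y"
  shows "w x = (\<Sum>\<beta>\<in>B. p \<beta> x * (s * a \<beta> x + \<theta>1 \<beta> x * w (\<theta> \<beta> x)))"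
    and "z x = (\<Sum>\<beta>\<in>B. p \<beta> x * (s * (b2 \<beta> x / b \<beta> x - (a \<beta> x)\<^sup>2) + s\<^sup>2 * (a \<beta> x)\<^sup>2
       + 2 * s * a \<beta> x * \<theta>1 \<beta> x * w (\<theta> \<beta> x) + \<theta>2 \<beta> x * w (\<theta> \<beta> x) + (\<theta>1 \<beta> x)\<^sup>2 * z (\<theta> \<beta> x)))"
proof -
  define u where "u \<beta> y = b \<beta> y powr s * v (\<theta> \<beta> y)" for \<beta> y
  define P where "P \<beta> y = s * a \<beta> y + \<theta>1 \<beta> y * w (\<theta> \<beta> y)" for \<beta> y
  define P' where "P' \<beta> y = s * (b2 \<beta> y / b \<beta> y - (a \<beta> y)\<^sup>2) + \<theta>2 \<beta> y * w (\<theta> \<beta> y)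
      + (\<theta>1 \<beta> y)\<^sup>2 * (z (\<theta> \<beta> y) - (w (\<theta> \<beta> y))\<^sup>2)" for \<beta> y
  have \<theta>_mem: "\<theta> \<beta> y \<in> H" if "\<beta> \<in> B" "y \<in> H" for \<beta> y
    using maps that by blast
  have du: "(u \<beta> has_real_derivative u \<beta> y * P \<beta> y) (at y)" if "\<beta> \<in> B" "y \<in> H" for \<beta> y
    unfolding u_def P_def a_def w_def
    by (rule has_real_derivative_powr_mult_comp[OF db[OF that] b_pos[OF that] d\<theta>[OF that]
          dv[OF \<theta>_mem[OF that]] v_pos[OF \<theta>_mem[OF that]]])
  have dP: "(P \<beta> has_real_derivative P' \<beta> y) (at y)" if "\<beta> \<in> B" "y \<in> H" for \<beta> y
    unfolding P_def P'_def a_def w_def z_def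
    by (rule has_real_derivative_log_deriv_sum[OF db[OF that] db1[OF that] b_pos[OF that] d\<theta>[OF that]
          d\<theta>1[OF that] dv[OF \<theta>_mem[OF that]] dv1[OF \<theta>_mem[OF that]] v_pos[OF \<theta>_mem[OF that]]])
  have eigen_u: "lam * v y = (\<Sum>\<beta>\<in>B. u \<beta> y)" if "y \<in> H" for y
    using eigen[OF that] by (simp add: u_def)
  have v1_eq: "lam * v1 y = (\<Sum>\<beta>\<in>B. u \<beta> y * P \<beta> y)" if "y \<in> H" for y
    by (rule derivative_of_sum_identity[OF \<open>open H\<close> that \<open>lam \<noteq> 0\<close> eigen_u dv[OF that] du[OF _ that]])
  have "lam * v2 x = (\<Sum>\<beta>\<in>B. u \<beta> x * P \<beta> x * P \<beta> x + P' \<beta> x * u \<beta> x)"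
    by (rule derivative_of_sum_identity[OF \<open>open H\<close> x \<open>lam \<noteq> 0\<close> v1_eq dv1[OF x] DERIV_mult[OF du[OF _ x] dP[OF _ x]]])
  then have v2_eq: "lam * v2 x = (\<Sum>\<beta>\<in>B. u \<beta> x * (P \<beta> x * P \<beta> x + P' \<beta> x))"
    by (simp add: algebra_simps)
  have p: "p \<beta> x = u \<beta> x / (lam * v x)" for \<beta>
    by (simp add: p_def u_def)
  have PP: "P \<beta> x * P \<beta> x + P' \<beta> x = s * (b2 \<beta> x / b \<beta> x - (a \<beta> x)\<^sup>2) + s\<^sup>2 * (a \<beta> x)\<^sup>2
       + 2 * s * a \<beta> x * \<theta>1 \<beta> x * w (\<theta> \<beta> x) + \<theta>2 \<beta> x * w (\<theta> \<beta> x) + (\<theta>1 \<beta> x)\<^sup>2 * z (\<theta> \<beta> x)" for \<beta>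
    by (simp add: P_def P'_def power2_eq_square algebra_simps)
  have "lam * v x \<noteq> 0"
    using \<open>lam \<noteq> 0\<close> v_pos[OF x] by simp
  then have w: "w x = (\<Sum>\<beta>\<in>B. p \<beta> x * P \<beta> x)" and z: "z x = (\<Sum>\<beta>\<in>B. p \<beta> x * (P \<beta> x * P \<beta> x + P' \<beta> x))"
    using v1_eq[OF x] v2_eq by (simp_all add: w_def z_def p times_divide_eq_left sum_divide_distrib[symmetric] field_simps)
  show "w x = (\<Sum>\<beta>\<in>B. p \<beta> x * (s * a \<beta> x + \<theta>1 \<beta> x * w (\<theta> \<beta> x)))"
    using w by (simp only: P_def)
  show "z x = (\<Sum>\<beta>\<in>B. p \<beta> x * (s * (b2 \<beta> x / b \<beta> x - (a \<beta> x)\<^sup>2) + s\<^sup>2 * (a \<beta> x)\<^sup>2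
       + 2 * s * a \<beta> x * \<theta>1 \<beta> x * w (\<theta> \<beta> x) + \<theta>2 \<beta> x * w (\<theta> \<beta> x) + (\<theta>1 \<beta> x)\<^sup>2 * z (\<theta> \<beta> x)))"
    using z by (simp only: PP)
qed

section \<open>Bounds by iterating the averaging identities\<close>

locale log_derivative_recursion =
  fixes B :: "'b set" and H :: "real set" and \<theta> \<theta>1 \<theta>2 a g p :: "'b \<Rightarrow> real \<Rightarrow> real"
    and w z :: "real \<Rightarrow> real" and s :: real and \<epsilon> :: "nat \<Rightarrow> real" and C1 M0 Cg Dg :: real
  assumes maps: "\<forall>\<beta>\<in>B. \<theta> \<beta> ` H \<subseteq> H"
    and abs_word_deriv_le: "\<And>\<omega> x. set \<omega> \<subseteq> B \<Longrightarrow> x \<in> H \<Longrightarrow> \<bar>word_deriv \<theta> \<theta>1 \<omega> x\<bar> \<le> \<epsilon> (length \<omega>)"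
    and abs_\<theta>2_le: "\<And>\<beta> y. \<beta> \<in> B \<Longrightarrow> y \<in> H \<Longrightarrow> \<bar>\<theta>2 \<beta> y\<bar> \<le> M0"
    and abs_a_le: "\<And>\<beta> y. \<beta> \<in> B \<Longrightarrow> y \<in> H \<Longrightarrow> \<bar>a \<beta> y\<bar> \<le> C1"
    and g_le: "\<And>\<beta> y. \<beta> \<in> B \<Longrightarrow> y \<in> H \<Longrightarrow> g \<beta> y \<le> Cg"
    and g_ge: "\<And>\<beta> y. \<beta> \<in> B \<Longrightarrow> y \<in> H \<Longrightarrow> - Dg \<le> g \<beta> y"
    and constants_nonneg: "0 \<le> C1" "0 \<le> M0" "0 \<le> Cg" "0 \<le> Dg" "0 \<le> s"
    and p_nonneg: "\<And>\<beta> y. \<beta> \<in> B \<Longrightarrow> y \<in> H \<Longrightarrow> 0 \<le> p \<beta> y"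
    and p_sum: "\<And>y. y \<in> H \<Longrightarrow> (\<Sum>\<beta>\<in>B. p \<beta> y) = 1"
    and w_eq: "\<And>y. y \<in> H \<Longrightarrow> w y = (\<Sum>\<beta>\<in>B. p \<beta> y * (s * a \<beta> y + \<theta>1 \<beta> y * w (\<theta> \<beta> y)))"
    and z_eq: "\<And>y. y \<in> H \<Longrightarrow> z y = (\<Sum>\<beta>\<in>B. p \<beta> y * (s * g \<beta> y + s\<^sup>2 * (a \<beta> y)\<^sup>2
       + 2 * s * a \<beta> y * \<theta>1 \<beta> y * w (\<theta> \<beta> y) + \<theta>2 \<beta> y * w (\<theta> \<beta> y) + (\<theta>1 \<beta> y)\<^sup>2 * z (\<theta> \<beta> y)))"
    and eps_nonneg: "\<And>k. 0 \<le> \<epsilon> k" and eps_summable: "summable \<epsilon>"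
    and eps2_summable: "summable (\<lambda>k. (\<epsilon> k)\<^sup>2)"
    and w_bounded: "\<exists>W. \<forall>y\<in>H. \<bar>w y\<bar> \<le> W" and z_bounded: "\<exists>Z. \<forall>y\<in>H. \<bar>z y\<bar> \<le> Z"
begin

abbreviation "S1 \<equiv> suminf \<epsilon>"
abbreviation "S2 \<equiv> (\<Sum>k. (\<epsilon> k)\<^sup>2)"
abbreviation "conv \<equiv> convolution (\<lambda>k. (\<epsilon> k)\<^sup>2) \<epsilon>"

lemma sum_eps_le: "(\<Sum>i<N. \<epsilon> i) \<le> S1"
  using eps_summable eps_nonneg by (intro sum_le_suminf) auto

lemma sum_eps2_le: "(\<Sum>i<N. (\<epsilon> i)\<^sup>2) \<le> S2"
  using eps2_summable by (intro sum_le_suminf) auto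

lemma sum_conv_le: "(\<Sum>i<N. conv i) \<le> S2 * S1"
  using eps_nonneg eps_summable eps2_summable by (intro sum_convolution_le) auto

lemma S1_nonneg: "0 \<le> S1"
  using eps_nonneg eps_summable by (simp add: suminf_nonneg)

lemma prefix_mem:
  assumes "set \<omega> \<subseteq> B" "l < length \<omega>" "x \<in> H"
  shows "\<omega> ! l \<in> B" "set (take l \<omega>) \<subseteq> B" "theta_word \<theta> (take l \<omega>) x \<in> H"
  using assms set_take_subset[of l \<omega>] nth_mem[of l \<omega>] theta_word_mem[OF maps] by blast+

lemma abs_word_deriv2_le:
  assumes \<omega>: "set \<omega> \<subseteq> B" and x: "x \<in> H"
  shows "\<bar>word_deriv2 \<theta> \<theta>1 \<theta>2 \<omega> x\<bar> \<le> M0 * conv (length \<omega>)"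
proof -
  have "\<bar>\<theta>2 (\<omega> ! l) (theta_word \<theta> (take l \<omega>) x) * (word_deriv \<theta> \<theta>1 (take l \<omega>) x)\<^sup>2
      * word_deriv \<theta> \<theta>1 (drop (Suc l) \<omega>) (theta_word \<theta> (take (Suc l) \<omega>) x)\<bar>
      \<le> M0 * ((\<epsilon> l)\<^sup>2 * \<epsilon> (length \<omega> - Suc l))" if l: "l < length \<omega>" for l
  proof -
    note mem = prefix_mem[OF \<omega> l x]
    have "set (drop (Suc l) \<omega>) \<subseteq> B" "theta_word \<theta> (take (Suc l) \<omega>) x \<in> H"
      using \<omega> set_drop_subset[of "Suc l" \<omega>] set_take_subset[of "Suc l" \<omega>] theta_word_mem[OF maps _ x] by auto
    then have suffix: "\<bar>word_deriv \<theta> \<theta>1 (drop (Suc l) \<omega>) (theta_word \<theta> (take (Suc l) \<omega>) x)\<bar> \<le> \<epsilon> (length \<omega> - Suc l)"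
      using abs_word_deriv_le by fastforce
    have "(word_deriv \<theta> \<theta>1 (take l \<omega>) x)\<^sup>2 \<le> (\<epsilon> l)\<^sup>2"
      using power_mono[OF abs_word_deriv_le[OF mem(2) x] abs_ge_zero, of 2] l by simp
    then have "\<bar>\<theta>2 (\<omega> ! l) (theta_word \<theta> (take l \<omega>) x)\<bar> * (word_deriv \<theta> \<theta>1 (take l \<omega>) x)\<^sup>2 \<le> M0 * (\<epsilon> l)\<^sup>2"
      using abs_\<theta>2_le[OF mem(1,3)] constants_nonneg by (intro mult_mono) auto
    from mult_mono[OF this suffix] show ?thesis
      using constants_nonneg eps_nonneg by (simp add: abs_mult mult.assoc)
  qed
  then have "\<bar>word_deriv2 \<theta> \<theta>1 \<theta>2 \<omega> x\<bar> \<le> (\<Sum>l<length \<omega>. M0 * ((\<epsilon> l)\<^sup>2 * \<epsilon> (length \<omega> - Suc l)))"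
    unfolding word_deriv2_def by (intro order_trans[OF sum_abs] sum_mono) auto
  then show ?thesis
    by (simp add: convolution_def sum_distrib_left)
qed

lemma abs_orbit_sum_le:
  assumes \<omega>: "set \<omega> \<subseteq> B" and x: "x \<in> H"
  shows "\<bar>orbit_sum \<theta> \<theta>1 a \<omega> x\<bar> \<le> C1 * S1"
proof -
  have "\<bar>orbit_sum \<theta> \<theta>1 a \<omega> x\<bar> \<le> (\<Sum>l<length \<omega>. C1 * \<epsilon> l)"
    unfolding orbit_sum_def
  proof (intro order_trans[OF sum_abs] sum_mono)
    fix l assume "l \<in> {..<length \<omega>}"
    then have l: "l < length \<omega>" by simp
    note mem = prefix_mem[OF \<omega> l x]
    show "\<bar>a (\<omega> ! l) (theta_word \<theta> (take l \<omega>) x) * word_deriv \<theta> \<theta>1 (take l \<omega>) x\<bar> \<le> C1 * \<epsilon> l"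
      unfolding abs_mult using abs_a_le[OF mem(1,3)] abs_word_deriv_le[OF mem(2) x] l
      by (intro mult_mono') auto
  qed
  also have "\<dots> \<le> C1 * S1"
    using sum_eps_le constants_nonneg by (simp add: sum_distrib_left[symmetric] mult_left_mono)
  finally show ?thesis .
qed

lemma orbit_sum2_bounds:
  assumes \<omega>: "set \<omega> \<subseteq> B" and x: "x \<in> H"
  shows "- (Dg * S2 + C1 * M0 * (S2 * S1)) \<le> orbit_sum2 \<theta> \<theta>1 \<theta>2 a g \<omega> x"
    and "orbit_sum2 \<theta> \<theta>1 \<theta>2 a g \<omega> x \<le> Cg * S2 + C1 * M0 * (S2 * S1)"
proof -
  let ?T = "\<lambda>l. g (\<omega> ! l) (theta_word \<theta> (take l \<omega>) x) * (word_deriv \<theta> \<theta>1 (take l \<omega>) x)\<^sup>2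
    + a (\<omega> ! l) (theta_word \<theta> (take l \<omega>) x) * word_deriv2 \<theta> \<theta>1 \<theta>2 (take l \<omega>) x"
  have "- (Dg * (\<epsilon> l)\<^sup>2 + C1 * M0 * conv l) \<le> ?T l \<and> ?T l \<le> Cg * (\<epsilon> l)\<^sup>2 + C1 * M0 * conv l"
    if "l \<in> {..<length \<omega>}" for l
  proof -
    have l: "l < length \<omega>" using that by simp
    note mem = prefix_mem[OF \<omega> l x]
    let ?g = "g (\<omega> ! l) (theta_word \<theta> (take l \<omega>) x)" and ?d2 = "(word_deriv \<theta> \<theta>1 (take l \<omega>) x)\<^sup>2"
    have d2: "?d2 \<le> (\<epsilon> l)\<^sup>2"
      using power_mono[OF abs_word_deriv_le[OF mem(2) x] abs_ge_zero, of 2] l by simp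
    have "?g * ?d2 \<le> Cg * (\<epsilon> l)\<^sup>2"
      using mult_right_mono[OF g_le[OF mem(1,3)], of ?d2] mult_left_mono[OF d2, of Cg] constants_nonneg by simp
    moreover have "- (Dg * (\<epsilon> l)\<^sup>2) \<le> ?g * ?d2"
      using mult_right_mono[OF g_ge[OF mem(1,3)], of ?d2] mult_left_mono[OF d2, of Dg] constants_nonneg by simp
    moreover have "\<bar>a (\<omega> ! l) (theta_word \<theta> (take l \<omega>) x) * word_deriv2 \<theta> \<theta>1 \<theta>2 (take l \<omega>) x\<bar> \<le> C1 * (M0 * conv l)"
      unfolding abs_mult using abs_a_le[OF mem(1,3)] abs_word_deriv2_le[OF mem(2) x] l
      by (intro mult_mono') auto
    ultimately show ?thesis by (simp add: abs_le_iff)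
  qed
  then have "- (\<Sum>l<length \<omega>. Dg * (\<epsilon> l)\<^sup>2 + C1 * M0 * conv l) \<le> orbit_sum2 \<theta> \<theta>1 \<theta>2 a g \<omega> x
      \<and> orbit_sum2 \<theta> \<theta>1 \<theta>2 a g \<omega> x \<le> (\<Sum>l<length \<omega>. Cg * (\<epsilon> l)\<^sup>2 + C1 * M0 * conv l)"
    unfolding orbit_sum2_def sum_negf[symmetric] by (auto intro!: sum_mono)
  moreover have "(\<Sum>l<length \<omega>. Dg * (\<epsilon> l)\<^sup>2 + C1 * M0 * conv l) \<le> Dg * S2 + C1 * M0 * (S2 * S1)"
    and "(\<Sum>l<length \<omega>. Cg * (\<epsilon> l)\<^sup>2 + C1 * M0 * conv l) \<le> Cg * S2 + C1 * M0 * (S2 * S1)"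
    using sum_eps2_le sum_conv_le constants_nonneg
    by (simp_all add: sum.distrib sum_distrib_left[symmetric] add_mono mult_left_mono)
  ultimately show "- (Dg * S2 + C1 * M0 * (S2 * S1)) \<le> orbit_sum2 \<theta> \<theta>1 \<theta>2 a g \<omega> x"
    and "orbit_sum2 \<theta> \<theta>1 \<theta>2 a g \<omega> x \<le> Cg * S2 + C1 * M0 * (S2 * S1)"
    by linarith+
qed

text \<open>With \<open>a = Db/b\<close>, \<open>g = D\<^sup>2(log b)\<close>, \<open>w = Dv/v\<close> and \<open>z = D\<^sup>2v/v\<close>, these are \<open>F'/F\<close> and
  \<open>F''/F\<close> for \<open>F = (\<Prod>\<^sub>i b\<^bsub>\<omega>\<^sub>i\<^esub> \<circ> \<theta>\<^bsub>\<omega>\<^sub><\<^sub>i\<^esub>)\<^sup>s \<cdot> (v \<circ> \<theta>\<^sub>\<omega>)\<close>, the contribution of \<open>\<omega>\<close> to the iterated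
  eigenvalue equation.\<close>

definition first_log_deriv :: "real \<Rightarrow> 'b list \<Rightarrow> real" where
  "first_log_deriv x \<omega> = s * orbit_sum \<theta> \<theta>1 a \<omega> x + word_deriv \<theta> \<theta>1 \<omega> x * w (theta_word \<theta> \<omega> x)"

definition second_log_deriv :: "real \<Rightarrow> 'b list \<Rightarrow> real" where
  "second_log_deriv x \<omega> = s * orbit_sum2 \<theta> \<theta>1 \<theta>2 a g \<omega> x + s\<^sup>2 * (orbit_sum \<theta> \<theta>1 a \<omega> x)\<^sup>2
     + (2 * s * orbit_sum \<theta> \<theta>1 a \<omega> x * word_deriv \<theta> \<theta>1 \<omega> x + word_deriv2 \<theta> \<theta>1 \<theta>2 \<omega> x) * w (theta_word \<theta> \<omega> x)
     + (word_deriv \<theta> \<theta>1 \<omega> x)\<^sup>2 * z (theta_word \<theta> \<omega> x)"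

lemma first_log_deriv_Nil [simp]: "first_log_deriv x [] = w x"
  by (simp add: first_log_deriv_def)

lemma second_log_deriv_Nil [simp]: "second_log_deriv x [] = z x"
  by (simp add: second_log_deriv_def)

lemma first_log_deriv_average:
  assumes "set \<omega> \<subseteq> B" and "x \<in> H"
  shows "first_log_deriv x \<omega> = (\<Sum>\<beta>\<in>B. p \<beta> (theta_word \<theta> \<omega> x) * first_log_deriv x (\<omega> @ [\<beta>]))"
proof -
  let ?y = "theta_word \<theta> \<omega> x" and ?A = "orbit_sum \<theta> \<theta>1 a \<omega> x" and ?d = "word_deriv \<theta> \<theta>1 \<omega> x"
  have y: "?y \<in> H"
    using theta_word_mem[OF maps assms] .
  have "first_log_deriv x \<omega> = (\<Sum>\<beta>\<in>B. p \<beta> ?y * (s * ?A)) + (\<Sum>\<beta>\<in>B. p \<beta> ?y * (?d * (s * a \<beta> ?y + \<theta>1 \<beta> ?y * w (\<theta> \<beta> ?y))))"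
    unfolding first_log_deriv_def w_eq[OF y] sum_distrib_left[symmetric] sum_distrib_right[symmetric] p_sum[OF y]
    by (simp add: sum_distrib_left mult.left_commute)
  also have "\<dots> = (\<Sum>\<beta>\<in>B. p \<beta> ?y * first_log_deriv x (\<omega> @ [\<beta>]))"
    unfolding sum.distrib[symmetric] first_log_deriv_def
    by (intro sum.cong) (simp_all add: orbit_sum_snoc word_deriv_snoc theta_word_snoc algebra_simps)
  finally show ?thesis .
qed

lemma second_log_deriv_average:
  assumes "set \<omega> \<subseteq> B" and "x \<in> H"
  shows "second_log_deriv x \<omega> = (\<Sum>\<beta>\<in>B. p \<beta> (theta_word \<theta> \<omega> x) * second_log_deriv x (\<omega> @ [\<beta>]))"
proof -
  let ?y = "theta_word \<theta> \<omega> x" and ?A = "orbit_sum \<theta> \<theta>1 a \<omega> x" and ?d = "word_deriv \<theta> \<theta>1 \<omega> x"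
    and ?B = "orbit_sum2 \<theta> \<theta>1 \<theta>2 a g \<omega> x" and ?e = "word_deriv2 \<theta> \<theta>1 \<theta>2 \<omega> x"
  have y: "?y \<in> H"
    using theta_word_mem[OF maps assms] .
  have "second_log_deriv x \<omega> = (\<Sum>\<beta>\<in>B. p \<beta> ?y * (s * ?B + s\<^sup>2 * ?A\<^sup>2))
      + (\<Sum>\<beta>\<in>B. p \<beta> ?y * ((2 * s * ?A * ?d + ?e) * (s * a \<beta> ?y + \<theta>1 \<beta> ?y * w (\<theta> \<beta> ?y))))
      + (\<Sum>\<beta>\<in>B. p \<beta> ?y * (?d\<^sup>2 * (s * g \<beta> ?y + s\<^sup>2 * (a \<beta> ?y)\<^sup>2 + 2 * s * a \<beta> ?y * \<theta>1 \<beta> ?y * w (\<theta> \<beta> ?y)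
          + \<theta>2 \<beta> ?y * w (\<theta> \<beta> ?y) + (\<theta>1 \<beta> ?y)\<^sup>2 * z (\<theta> \<beta> ?y))))"
    unfolding second_log_deriv_def w_eq[OF y] z_eq[OF y] sum_distrib_left[symmetric] sum_distrib_right[symmetric] p_sum[OF y]
    by (simp add: sum_distrib_left mult.left_commute)
  also have "\<dots> = (\<Sum>\<beta>\<in>B. p \<beta> ?y * second_log_deriv x (\<omega> @ [\<beta>]))"
    unfolding sum.distrib[symmetric] second_log_deriv_def
    by (intro sum.cong) (simp_all add: orbit_sum_snoc orbit_sum2_snoc word_deriv_snoc word_deriv2_snoc
        theta_word_snoc algebra_simps power2_eq_square)
  finally show ?thesis .
qed

lemma word_average_bounds:
  assumes x: "x \<in> H"
    and average: "\<And>\<omega>. set \<omega> \<subseteq> B \<Longrightarrow> Q \<omega> = (\<Sum>\<beta>\<in>B. p \<beta> (theta_word \<theta> \<omega> x) * Q (\<omega> @ [\<beta>]))"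
    and bounds: "\<And>\<omega>. \<omega> \<in> words B N \<Longrightarrow> L \<le> Q \<omega> \<and> Q \<omega> \<le> R"
  shows "L \<le> Q [] \<and> Q [] \<le> R"
proof (rule averaging_recursion_bounds[where P = "\<lambda>\<omega> \<beta>. p \<beta> (theta_word \<theta> \<omega> x)"])
  show "0 \<le> p \<beta> (theta_word \<theta> \<omega> x)" if "set \<omega> \<subseteq> B" "\<beta> \<in> B" for \<omega> \<beta>
    using p_nonneg[OF that(2) theta_word_mem[OF maps that(1) x]] .
  show "(\<Sum>\<beta>\<in>B. p \<beta> (theta_word \<theta> \<omega> x)) = 1" if "set \<omega> \<subseteq> B" for \<omega>
    using p_sum[OF theta_word_mem[OF maps that x]] .
qed (use average bounds in auto)

lemma abs_first_log_deriv_le: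
  assumes \<omega>: "\<omega> \<in> words B N" and x: "x \<in> H" and W: "\<forall>y\<in>H. \<bar>w y\<bar> \<le> W"
  shows "\<bar>first_log_deriv x \<omega>\<bar> \<le> s * C1 * S1 + \<epsilon> N * W"
proof -
  have \<omega>B: "set \<omega> \<subseteq> B" and N: "length \<omega> = N"
    using \<omega> by (auto simp: words_def)
  have "s * \<bar>orbit_sum \<theta> \<theta>1 a \<omega> x\<bar> \<le> s * (C1 * S1)"
    using abs_orbit_sum_le[OF \<omega>B x] constants_nonneg by (intro mult_left_mono) auto
  moreover have "\<bar>word_deriv \<theta> \<theta>1 \<omega> x\<bar> * \<bar>w (theta_word \<theta> \<omega> x)\<bar> \<le> \<epsilon> N * W"
    using abs_word_deriv_le[OF \<omega>B x] W theta_word_mem[OF maps \<omega>B x] N eps_nonneg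
    by (intro mult_mono) auto
  moreover have "\<bar>first_log_deriv x \<omega>\<bar>
      \<le> \<bar>s * orbit_sum \<theta> \<theta>1 a \<omega> x\<bar> + \<bar>word_deriv \<theta> \<theta>1 \<omega> x * w (theta_word \<theta> \<omega> x)\<bar>"
    unfolding first_log_deriv_def by (rule abs_triangle_ineq)
  then have "\<bar>first_log_deriv x \<omega>\<bar>
      \<le> s * \<bar>orbit_sum \<theta> \<theta>1 a \<omega> x\<bar> + \<bar>word_deriv \<theta> \<theta>1 \<omega> x\<bar> * \<bar>w (theta_word \<theta> \<omega> x)\<bar>"
    using constants_nonneg by (simp add: abs_mult)
  ultimately show ?thesis by simp
qed

lemma abs_w_le:
  assumes x: "x \<in> H"
  shows "\<bar>w x\<bar> \<le> s * C1 * S1"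
proof -
  obtain W where W: "\<forall>y\<in>H. \<bar>w y\<bar> \<le> W"
    using w_bounded by blast
  have "\<bar>w x\<bar> \<le> s * C1 * S1 + \<epsilon> N * W" for N
  proof -
    have "- (s * C1 * S1 + \<epsilon> N * W) \<le> first_log_deriv x [] \<and> first_log_deriv x [] \<le> s * C1 * S1 + \<epsilon> N * W"
    proof (rule word_average_bounds[where N = N, OF x first_log_deriv_average[OF _ x]])
      fix \<omega> assume "\<omega> \<in> words B N"
      from abs_first_log_deriv_le[OF this x W]
      show "- (s * C1 * S1 + \<epsilon> N * W) \<le> first_log_deriv x \<omega> \<and> first_log_deriv x \<omega> \<le> s * C1 * S1 + \<epsilon> N * W"
        unfolding abs_le_iff by linarith
    qed
    then show ?thesis
      by (simp add: abs_le_iff)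
  qed
  moreover have "(\<lambda>N. s * C1 * S1 + \<epsilon> N * W) \<longlonglongrightarrow> s * C1 * S1 + 0 * W"
    using summable_LIMSEQ_zero[OF eps_summable] by (intro tendsto_intros)
  ultimately show ?thesis
    by (intro LIMSEQ_le_const[of _ "s * C1 * S1"]) auto
qed

definition remainder :: "real \<Rightarrow> nat \<Rightarrow> real" where
  "remainder Z N = (2 * s * (C1 * S1) * \<epsilon> N + M0 * conv N) * (s * C1 * S1) + (\<epsilon> N)\<^sup>2 * Z"

lemma remainder_tendsto_zero: "remainder Z \<longlonglongrightarrow> 0"
proof -
  have "remainder Z \<longlonglongrightarrow> (2 * s * (C1 * S1) * 0 + M0 * 0) * (s * C1 * S1) + 0\<^sup>2 * Z"
    unfolding remainder_def using summable_LIMSEQ_zero[OF eps_summable] eps_nonneg eps_summable eps2_summable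
    by (intro tendsto_intros convolution_tendsto_zero) auto
  then show ?thesis by simp
qed

lemma second_log_deriv_bounds:
  assumes \<omega>: "\<omega> \<in> words B N" and x: "x \<in> H" and Z: "\<forall>y\<in>H. \<bar>z y\<bar> \<le> Z"
  shows "- s * (Dg * S2 + C1 * M0 * (S2 * S1)) - remainder Z N \<le> second_log_deriv x \<omega>"
    and "second_log_deriv x \<omega> \<le> s * (Cg * S2 + C1 * M0 * (S2 * S1)) + s\<^sup>2 * (C1 * S1)\<^sup>2 + remainder Z N"
proof -
  have \<omega>B: "set \<omega> \<subseteq> B" and N: "length \<omega> = N"
    using \<omega> by (auto simp: words_def)
  have y: "theta_word \<theta> \<omega> x \<in> H"
    using theta_word_mem[OF maps \<omega>B x] .
  let ?A = "orbit_sum \<theta> \<theta>1 a \<omega> x" and ?d = "word_deriv \<theta> \<theta>1 \<omega> x" and ?e = "word_deriv2 \<theta> \<theta>1 \<theta>2 \<omega> x"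
    and ?B = "orbit_sum2 \<theta> \<theta>1 \<theta>2 a g \<omega> x"
  have A: "\<bar>?A\<bar> \<le> C1 * S1" and d: "\<bar>?d\<bar> \<le> \<epsilon> N" and e: "\<bar>?e\<bar> \<le> M0 * conv N"
    using abs_orbit_sum_le[OF \<omega>B x] abs_word_deriv_le[OF \<omega>B x] abs_word_deriv2_le[OF \<omega>B x] N by auto
  have "2 * s * \<bar>?A\<bar> * \<bar>?d\<bar> \<le> 2 * s * (C1 * S1) * \<epsilon> N"
    using A d constants_nonneg S1_nonneg by (intro mult_mono mult_left_mono) auto
  then have "\<bar>2 * s * ?A * ?d + ?e\<bar> \<le> 2 * s * (C1 * S1) * \<epsilon> N + M0 * conv N"
    using e abs_triangle_ineq[of "2 * s * ?A * ?d" ?e] constants_nonneg by (simp add: abs_mult)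
  then have middle: "\<bar>(2 * s * ?A * ?d + ?e) * w (theta_word \<theta> \<omega> x)\<bar>
      \<le> (2 * s * (C1 * S1) * \<epsilon> N + M0 * conv N) * (s * C1 * S1)"
    unfolding abs_mult using abs_w_le[OF y] by (intro mult_mono) auto
  have last: "\<bar>?d\<^sup>2 * z (theta_word \<theta> \<omega> x)\<bar> \<le> (\<epsilon> N)\<^sup>2 * Z"
    using power_mono[OF d abs_ge_zero, of 2] Z y unfolding abs_mult by (intro mult_mono) auto
  have "0 \<le> s\<^sup>2 * ?A\<^sup>2" and "s\<^sup>2 * ?A\<^sup>2 \<le> s\<^sup>2 * (C1 * S1)\<^sup>2"
    using power_mono[OF A abs_ge_zero, of 2] by (auto intro!: mult_left_mono)
  moreover have "- s * (Dg * S2 + C1 * M0 * (S2 * S1)) \<le> s * ?B" and "s * ?B \<le> s * (Cg * S2 + C1 * M0 * (S2 * S1))"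
    using mult_left_mono[OF orbit_sum2_bounds(1)[OF \<omega>B x], of s] mult_left_mono[OF orbit_sum2_bounds(2)[OF \<omega>B x], of s]
      constants_nonneg by (auto simp: algebra_simps)
  ultimately show "- s * (Dg * S2 + C1 * M0 * (S2 * S1)) - remainder Z N \<le> second_log_deriv x \<omega>"
    and "second_log_deriv x \<omega> \<le> s * (Cg * S2 + C1 * M0 * (S2 * S1)) + s\<^sup>2 * (C1 * S1)\<^sup>2 + remainder Z N"
    using middle last unfolding second_log_deriv_def remainder_def abs_le_iff by linarith+
qed

lemma z_bounds:
  assumes x: "x \<in> H"
  shows "z x \<le> s\<^sup>2 * C1\<^sup>2 * S1\<^sup>2 + s * S2 * (Cg + C1 * M0 * S1)"
    and "- s * S2 * (Dg + C1 * M0 * S1) \<le> z x"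
proof -
  obtain Z where Z: "\<forall>y\<in>H. \<bar>z y\<bar> \<le> Z"
    using z_bounded by blast
  define lower where "lower = - s * (Dg * S2 + C1 * M0 * (S2 * S1))"
  define upper where "upper = s * (Cg * S2 + C1 * M0 * (S2 * S1)) + s\<^sup>2 * (C1 * S1)\<^sup>2"
  have "lower - remainder Z N \<le> z x \<and> z x \<le> upper + remainder Z N" for N
  proof -
    have "lower - remainder Z N \<le> second_log_deriv x [] \<and> second_log_deriv x [] \<le> upper + remainder Z N"
      unfolding lower_def upper_def
    proof (rule word_average_bounds[where N = N, OF x second_log_deriv_average[OF _ x]])
      fix \<omega> assume "\<omega> \<in> words B N"
      from second_log_deriv_bounds[OF this x Z]
      show "- s * (Dg * S2 + C1 * M0 * (S2 * S1)) - remainder Z N \<le> second_log_deriv x \<omega>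
          \<and> second_log_deriv x \<omega> \<le> s * (Cg * S2 + C1 * M0 * (S2 * S1)) + s\<^sup>2 * (C1 * S1)\<^sup>2 + remainder Z N"
        by blast
    qed
    then show ?thesis
      by simp
  qed
  moreover have "(\<lambda>N. upper + remainder Z N) \<longlonglongrightarrow> upper" and "(\<lambda>N. lower - remainder Z N) \<longlonglongrightarrow> lower"
    using tendsto_add[OF tendsto_const remainder_tendsto_zero, of upper]
      tendsto_diff[OF tendsto_const remainder_tendsto_zero, of lower] by simp_all
  ultimately have "z x \<le> upper" and "lower \<le> z x"
    using LIMSEQ_le_const[of "\<lambda>N. upper + remainder Z N" upper "z x"]
      LIMSEQ_le_const2[of "\<lambda>N. lower - remainder Z N" lower "z x"] by auto
  then show "z x \<le> s\<^sup>2 * C1\<^sup>2 * S1\<^sup>2 + s * S2 * (Cg + C1 * M0 * S1)"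
    and "- s * S2 * (Dg + C1 * M0 * S1) \<le> z x"
    unfolding lower_def upper_def by (simp_all add: algebra_simps power_mult_distrib)
qed

end

locale eigenfunction_problem =
  fixes n m :: nat and c d :: "nat \<Rightarrow> real" and H :: "real set"
    and B :: "'b set" and b \<theta> :: "'b \<Rightarrow> real \<Rightarrow> real"
    and Db D\<theta> :: "'b \<Rightarrow> nat \<Rightarrow> real \<Rightarrow> real"
    and s lam :: real and v :: "real \<Rightarrow> real" and Dv :: "nat \<Rightarrow> real \<Rightarrow> real"
  assumes n_pos: "n \<ge> 1"
    and cd: "\<forall>j<n. c j < d j"
    and disj: "\<forall>i<n. \<forall>j<n. i \<noteq> j \<longrightarrow> {c i..d i} \<inter> {c j..d j} = {}"
    and H_def: "H = (\<Union>j<n. {c j<..<d j})"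
    and B_fin: "finite B" and B_ne: "B \<noteq> {}"
    and m2: "m \<ge> 2"
    and b_Cm: "\<forall>\<beta>\<in>B. Cm_closure m H (b \<beta>) (Db \<beta>)"
    and \<theta>_Cm: "\<forall>\<beta>\<in>B. Cm_closure m H (\<theta> \<beta>) (D\<theta> \<beta>)"
    and b_pos: "\<forall>\<beta>\<in>B. \<forall>x\<in>closure H. b \<beta> x > 0"
    and \<theta>_maps: "\<forall>\<beta>\<in>B. \<theta> \<beta> ` H \<subseteq> H"
    and contr: "\<exists>\<mu>::nat. \<exists>\<kappa>::real. \<mu> \<ge> 1 \<and> \<kappa> < 1 \<and>
        (\<forall>\<omega>\<in>words B \<mu>. \<forall>x\<in>closure H. \<forall>y\<in>closure H.
           \<bar>theta_word \<theta> \<omega> x - theta_word \<theta> \<omega> y\<bar> \<le> \<kappa> * \<bar>x - y\<bar>)"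
    and s_pos: "s > 0"
    and v_Cm: "Cm_closure m H v Dv"
    and v_pos: "\<forall>x\<in>closure H. v x > 0"
    and v_eig: "\<forall>x\<in>closure H. (\<Sum>\<beta>\<in>B. b \<beta> x powr s * v (\<theta> \<beta> x)) = lam * v x"
begin

abbreviation "C1 \<equiv> Sup {\<bar>Db \<beta> 1 x\<bar> / b \<beta> x | \<beta> x. \<beta> \<in> B \<and> x \<in> H}"
abbreviation "C2 \<equiv> Sup {\<bar>Db \<beta> 2 x\<bar> / b \<beta> x | \<beta> x. \<beta> \<in> B \<and> x \<in> H}"
abbreviation "M0 \<equiv> Sup {\<bar>D\<theta> \<beta> 2 x\<bar> | \<beta> x. \<beta> \<in> B \<and> x \<in> closure H}"

lemma open_H: "open H" and compact_closure_H: "compact (closure H)"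
  and two_points: "\<exists>x y. x \<in> H \<and> y \<in> H \<and> x \<noteq> y"
  using union_of_intervals_facts[OF n_pos cd H_def] by auto

lemmas b_derivs = Cm_closure_derivatives[OF b_Cm[rule_format] open_H m2]
lemmas \<theta>_derivs = Cm_closure_derivatives[OF \<theta>_Cm[rule_format] open_H m2]
lemmas v_derivs = Cm_closure_derivatives[OF v_Cm open_H m2]

lemma \<theta>_lipschitz: "\<forall>\<beta>\<in>B. \<exists>L. \<forall>x\<in>H. \<forall>y\<in>H. \<bar>\<theta> \<beta> x - \<theta> \<beta> y\<bar> \<le> L * \<bar>x - y\<bar>"
proof
  fix \<beta> assume "\<beta> \<in> B"
  then show "\<exists>L. \<forall>x\<in>H. \<forall>y\<in>H. \<bar>\<theta> \<beta> x - \<theta> \<beta> y\<bar> \<le> L * \<bar>x - y\<bar>"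
    by (rule Cm_closure_lipschitz_on_intervals[OF cd disj H_def compact_closure_H \<theta>_Cm[rule_format] m2])
qed

lemma summable_eps: "summable (eps_seq B \<theta> H)"
proof -
  obtain \<mu> :: nat and \<kappa> :: real where "\<mu> \<ge> 1" "\<kappa> < 1" and "\<forall>\<omega>\<in>words B \<mu>. \<forall>x\<in>closure H. \<forall>y\<in>closure H.
      \<bar>theta_word \<theta> \<omega> x - theta_word \<theta> \<omega> y\<bar> \<le> \<kappa> * \<bar>x - y\<bar>"
    using contr by blast
  from eps_seq_summable[OF B_fin B_ne two_points \<theta>_maps \<theta>_lipschitz this(1,2) closure_subset this(3)]
  show ?thesis .
qed

lemma abs_word_deriv_le:
  "set \<omega> \<subseteq> B \<Longrightarrow> x \<in> H \<Longrightarrow> \<bar>word_deriv \<theta> (\<lambda>\<beta>. D\<theta> \<beta> 1) \<omega> x\<bar> \<le> eps_seq B \<theta> H (length \<omega>)"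
  by (rule abs_word_deriv_le_eps_seq[OF B_fin B_ne two_points \<theta>_maps \<theta>_lipschitz open_H \<theta>_derivs(1)])

lemma b_ratio_le_Sup:
  assumes "\<beta> \<in> B" "x \<in> H" "k \<le> m"
  shows "\<bar>Db \<beta> k x\<bar> / b \<beta> x \<le> Sup {\<bar>Db \<beta> k x\<bar> / b \<beta> x | \<beta> x. \<beta> \<in> B \<and> x \<in> H}"
proof (rule le_Sup_family[OF B_fin _ assms(1,2)])
  fix \<beta> assume \<beta>: "\<beta> \<in> B"
  obtain M where M: "\<forall>x\<in>closure H. \<bar>Db \<beta> k x / b \<beta> x\<bar> \<le> M"
    using Cm_closure_ratio_bounded[OF b_Cm[rule_format, OF \<beta>] compact_closure_H \<open>k \<le> m\<close>] b_pos \<beta> by blast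
  have "\<bar>Db \<beta> k x\<bar> / b \<beta> x \<le> M" if "x \<in> H" for x
  proof -
    have x: "x \<in> closure H"
      using that closure_subset by blast
    then have "0 < b \<beta> x"
      using b_pos \<beta> by blast
    with M[rule_format, OF x] show ?thesis
      by (simp add: abs_divide)
  qed
  then show "\<exists>M. \<forall>x\<in>H. \<bar>Db \<beta> k x\<bar> / b \<beta> x \<le> M"
    by blast
qed

lemma abs_D\<theta>_le_Sup:
  assumes "\<beta> \<in> B" "x \<in> closure H" "k \<le> m"
  shows "\<bar>D\<theta> \<beta> k x\<bar> \<le> Sup {\<bar>D\<theta> \<beta> k x\<bar> | \<beta> x. \<beta> \<in> B \<and> x \<in> closure H}"
proof (rule le_Sup_family[OF B_fin _ assms(1,2)])
  fix \<beta> assume \<beta>: "\<beta> \<in> B"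
  obtain M where "\<And>x. x \<in> closure H \<Longrightarrow> norm (D\<theta> \<beta> k x) \<le> M"
    using continuous_on_compact_bound[OF compact_closure_H Cm_closure_continuous[OF \<theta>_Cm[rule_format, OF \<beta>] \<open>k \<le> m\<close>]]
    by blast
  then show "\<exists>M. \<forall>x\<in>closure H. \<bar>D\<theta> \<beta> k x\<bar> \<le> M"
    by auto
qed

lemma eigenvalue_pos: "0 < lam"
proof -
  obtain x where x: "x \<in> H"
    using two_points by blast
  then have xc: "x \<in> closure H"
    using closure_subset by blast
  have "0 < b \<beta> x powr s * v (\<theta> \<beta> x)" if \<beta>: "\<beta> \<in> B" for \<beta>
  proof -
    have "0 < b \<beta> x"
      using b_pos \<beta> x closure_subset by blast
    moreover have "0 < v (\<theta> \<beta> x)"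
      using v_pos \<theta>_maps \<beta> x closure_subset by blast
    ultimately show ?thesis by simp
  qed
  then have "0 < (\<Sum>\<beta>\<in>B. b \<beta> x powr s * v (\<theta> \<beta> x))"
    by (rule sum_pos[OF B_fin B_ne])
  then have "0 < lam * v x"
    using v_eig[rule_format, OF xc] by simp
  moreover have "0 < v x"
    using v_pos xc by blast
  ultimately show ?thesis
    by (simp add: zero_less_mult_iff)
qed

lemma b_pos_H: "\<beta> \<in> B \<Longrightarrow> y \<in> H \<Longrightarrow> 0 < b \<beta> y"
  and v_pos_H: "y \<in> H \<Longrightarrow> 0 < v y"
  and v_eig_H: "y \<in> H \<Longrightarrow> (\<Sum>\<beta>\<in>B. b \<beta> y powr s * v (\<theta> \<beta> y)) = lam * v y"
  using b_pos v_pos v_eig closure_subset by blast+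

definition weight :: "'b \<Rightarrow> real \<Rightarrow> real" where
  "weight \<beta> y = b \<beta> y powr s * v (\<theta> \<beta> y) / (lam * v y)"

definition dlog_b :: "'b \<Rightarrow> real \<Rightarrow> real" where
  "dlog_b \<beta> y = Db \<beta> 1 y / b \<beta> y"

definition d2log_b :: "'b \<Rightarrow> real \<Rightarrow> real" where
  "d2log_b \<beta> y = Db \<beta> 2 y / b \<beta> y - (dlog_b \<beta> y)\<^sup>2"

definition dlog_v :: "real \<Rightarrow> real" where
  "dlog_v y = Dv 1 y / v y"

definition d2v_ratio :: "real \<Rightarrow> real" where
  "d2v_ratio y = Dv 2 y / v y"

lemma weight_nonneg:
  assumes "\<beta> \<in> B" "y \<in> H"
  shows "0 \<le> weight \<beta> y"
proof -
  have "\<theta> \<beta> y \<in> H"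
    using \<theta>_maps assms by blast
  then show ?thesis
    using b_pos_H[OF assms] v_pos_H[OF assms(2)] v_pos_H[OF \<open>\<theta> \<beta> y \<in> H\<close>] eigenvalue_pos unfolding weight_def
    by (intro divide_nonneg_pos mult_nonneg_nonneg) auto
qed

lemma weight_sum:
  assumes "y \<in> H"
  shows "(\<Sum>\<beta>\<in>B. weight \<beta> y) = 1"
proof -
  have "lam * v y \<noteq> 0"
    using v_pos_H[OF assms] eigenvalue_pos by simp
  then show ?thesis
    using v_eig_H[OF assms] unfolding weight_def sum_divide_distrib[symmetric] by simp
qed

lemma dlog_v_eq:
  assumes "y \<in> H"
  shows "dlog_v y = (\<Sum>\<beta>\<in>B. weight \<beta> y * (s * dlog_b \<beta> y + D\<theta> \<beta> 1 y * dlog_v (\<theta> \<beta> y)))"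
  unfolding weight_def dlog_b_def dlog_v_def
  by (rule log_derivatives_of_eigenfunction(1)[OF open_H \<theta>_maps b_pos_H b_derivs \<theta>_derivs v_derivs v_pos_H
        less_imp_neq[OF eigenvalue_pos, symmetric] v_eig_H assms])

lemma d2v_ratio_eq:
  assumes "y \<in> H"
  shows "d2v_ratio y = (\<Sum>\<beta>\<in>B. weight \<beta> y * (s * d2log_b \<beta> y + s\<^sup>2 * (dlog_b \<beta> y)\<^sup>2
      + 2 * s * dlog_b \<beta> y * D\<theta> \<beta> 1 y * dlog_v (\<theta> \<beta> y) + D\<theta> \<beta> 2 y * dlog_v (\<theta> \<beta> y)
      + (D\<theta> \<beta> 1 y)\<^sup>2 * d2v_ratio (\<theta> \<beta> y)))"
  unfolding weight_def dlog_b_def d2log_b_def dlog_v_def d2v_ratio_def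
  by (rule log_derivatives_of_eigenfunction(2)[OF open_H \<theta>_maps b_pos_H b_derivs \<theta>_derivs v_derivs v_pos_H
        less_imp_neq[OF eigenvalue_pos, symmetric] v_eig_H assms])

lemma abs_dlog_b_le:
  assumes "\<beta> \<in> B" "y \<in> H"
  shows "\<bar>dlog_b \<beta> y\<bar> \<le> C1"
  using b_ratio_le_Sup[OF assms, of 1] m2 b_pos_H[OF assms] by (simp add: dlog_b_def abs_divide)

lemma d2log_b_bounds:
  assumes "\<beta> \<in> B" "y \<in> H"
  shows "d2log_b \<beta> y \<le> C2" and "- (C2 + C1\<^sup>2) \<le> d2log_b \<beta> y"
proof -
  have "\<bar>Db \<beta> 2 y / b \<beta> y\<bar> \<le> C2"
    using b_ratio_le_Sup[OF assms, of 2] m2 b_pos_H[OF assms] by (simp add: abs_divide)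
  moreover have "(dlog_b \<beta> y)\<^sup>2 \<le> C1\<^sup>2"
    using power_mono[OF abs_dlog_b_le[OF assms] abs_ge_zero, of 2] by simp
  ultimately show "d2log_b \<beta> y \<le> C2" and "- (C2 + C1\<^sup>2) \<le> d2log_b \<beta> y"
    unfolding d2log_b_def abs_le_iff by (simp_all add: add.commute) (use zero_le_power2[of "dlog_b \<beta> y"] in linarith)+
qed

lemma constants_nonneg: "0 \<le> C1" "0 \<le> C2" "0 \<le> M0"
proof -
  obtain \<beta> y where \<beta>: "\<beta> \<in> B" and y: "y \<in> H"
    using B_ne two_points by blast
  have "0 \<le> \<bar>Db \<beta> k y\<bar> / b \<beta> y" for k
    using b_pos_H[OF \<beta> y] by simp
  moreover have "1 \<le> m" and "2 \<le> m"
    using m2 by auto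
  ultimately show "0 \<le> C1" "0 \<le> C2"
    using b_ratio_le_Sup[OF \<beta> y] by (meson order_trans)+
  show "0 \<le> M0"
    using abs_D\<theta>_le_Sup[OF \<beta> subsetD[OF closure_subset y] m2] by (rule order_trans[OF abs_ge_zero])
qed

lemma ratio_bounded:
  assumes "k \<le> m"
  shows "\<exists>M. \<forall>y\<in>H. \<bar>Dv k y / v y\<bar> \<le> M"
proof -
  obtain M where "\<forall>y\<in>closure H. \<bar>Dv k y / v y\<bar> \<le> M"
    using Cm_closure_ratio_bounded[OF v_Cm compact_closure_H assms] v_pos by blast
  then show ?thesis
    using closure_subset by blast
qed

sublocale log_derivative_recursion B H \<theta> "\<lambda>\<beta>. D\<theta> \<beta> 1" "\<lambda>\<beta>. D\<theta> \<beta> 2" dlog_b d2log_b weight dlog_v d2v_ratio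
    s "eps_seq B \<theta> H" C1 M0 C2 "C2 + C1\<^sup>2"
proof
  show "\<bar>D\<theta> \<beta> 2 y\<bar> \<le> M0" if "\<beta> \<in> B" "y \<in> H" for \<beta> y
    using abs_D\<theta>_le_Sup[OF that(1) subsetD[OF closure_subset that(2)] m2] .
  show "0 \<le> C2 + C1\<^sup>2"
    using constants_nonneg by simp
  show "0 \<le> s"
    using s_pos by simp
  show "\<exists>W. \<forall>y\<in>H. \<bar>dlog_v y\<bar> \<le> W" and "\<exists>Z. \<forall>y\<in>H. \<bar>d2v_ratio y\<bar> \<le> Z"
    using ratio_bounded[of 1] ratio_bounded[of 2] m2 unfolding dlog_v_def d2v_ratio_def by auto
  show "0 \<le> eps_seq B \<theta> H k" for k
    by (rule eps_seq_nonneg[OF B_fin B_ne two_points \<theta>_maps \<theta>_lipschitz])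
  then show "summable (\<lambda>k. (eps_seq B \<theta> H k)\<^sup>2)"
    by (rule summable_square_of_summable[OF _ summable_eps])
qed (fact \<theta>_maps abs_word_deriv_le abs_dlog_b_le d2log_b_bounds constants_nonneg weight_nonneg weight_sum
      dlog_v_eq d2v_ratio_eq summable_eps)+

lemma second_ratio_bounds:
  assumes x: "x \<in> closure H"
  shows "Dv 2 x / v x \<le> s\<^sup>2 * C1\<^sup>2 * (\<Sum>k. eps_seq B \<theta> H k)\<^sup>2
      + s * (\<Sum>k. (eps_seq B \<theta> H k)\<^sup>2) * (C2 + C1 * M0 * (\<Sum>k. eps_seq B \<theta> H k))"
    and "- s * (\<Sum>k. (eps_seq B \<theta> H k)\<^sup>2) * ((C2 + C1\<^sup>2) + C1 * M0 * (\<Sum>k. eps_seq B \<theta> H k)) \<le> Dv 2 x / v x"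
proof -
  let ?S1 = "\<Sum>k. eps_seq B \<theta> H k" and ?S2 = "\<Sum>k. (eps_seq B \<theta> H k)\<^sup>2"
  have v0: "Dv 0 y = v y" if "y \<in> closure H" for y
    using v_Cm that by (simp add: Cm_closure_def)
  have ratio: "Dv 2 y / Dv 0 y = d2v_ratio y" if "y \<in> H" for y
    using v0 subsetD[OF closure_subset that] by (simp add: d2v_ratio_def)
  have cont: "continuous_on (closure H) (\<lambda>y. Dv 2 y / Dv 0 y)"
    using Cm_closure_continuous_ratio[OF v_Cm m2] v_pos by blast
  have "Dv 2 x / Dv 0 x \<le> s\<^sup>2 * C1\<^sup>2 * ?S1\<^sup>2 + s * ?S2 * (C2 + C1 * M0 * ?S1)"
  proof (rule continuous_le_on_closure[OF cont x])
    fix y assume "y \<in> H"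
    then show "Dv 2 y / Dv 0 y \<le> s\<^sup>2 * C1\<^sup>2 * ?S1\<^sup>2 + s * ?S2 * (C2 + C1 * M0 * ?S1)"
      unfolding ratio[OF \<open>y \<in> H\<close>] by (rule z_bounds(1))
  qed
  moreover have "- s * ?S2 * ((C2 + C1\<^sup>2) + C1 * M0 * ?S1) \<le> Dv 2 x / Dv 0 x"
  proof (rule continuous_ge_on_closure[OF cont x])
    fix y assume "y \<in> H"
    then show "- s * ?S2 * ((C2 + C1\<^sup>2) + C1 * M0 * ?S1) \<le> Dv 2 y / Dv 0 y"
      unfolding ratio[OF \<open>y \<in> H\<close>] by (rule z_bounds(2))
  qed
  ultimately show "Dv 2 x / v x \<le> s\<^sup>2 * C1\<^sup>2 * ?S1\<^sup>2 + s * ?S2 * (C2 + C1 * M0 * ?S1)"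
    and "- s * ?S2 * ((C2 + C1\<^sup>2) + C1 * M0 * ?S1) \<le> Dv 2 x / v x"
    using v0[OF x] by simp_all
qed

end

theorem theorem6p4:
  fixes n m :: nat and c d :: "nat \<Rightarrow> real" and H :: "real set"
    and B :: "'b set" and b \<theta> :: "'b \<Rightarrow> real \<Rightarrow> real"
    and Db D\<theta> :: "'b \<Rightarrow> nat \<Rightarrow> real \<Rightarrow> real"
    and s lam :: real and v :: "real \<Rightarrow> real" and Dv :: "nat \<Rightarrow> real \<Rightarrow> real"
  assumes n_pos: "n \<ge> 1"
    and cd: "\<forall>j<n. c j < d j"
    and disj: "\<forall>i<n. \<forall>j<n. i \<noteq> j \<longrightarrow> {c i..d i} \<inter> {c j..d j} = {}"
    and H_def: "H = (\<Union>j<n. {c j<..<d j})"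
    and B_fin: "finite B" and B_ne: "B \<noteq> {}"
    and m2: "m \<ge> 2"
    and b_Cm: "\<forall>\<beta>\<in>B. Cm_closure m H (b \<beta>) (Db \<beta>)"
    and \<theta>_Cm: "\<forall>\<beta>\<in>B. Cm_closure m H (\<theta> \<beta>) (D\<theta> \<beta>)"
    and b_pos: "\<forall>\<beta>\<in>B. \<forall>x\<in>closure H. b \<beta> x > 0"
    and \<theta>_maps: "\<forall>\<beta>\<in>B. \<theta> \<beta> ` H \<subseteq> H"
    and contr: "\<exists>\<mu>::nat. \<exists>\<kappa>::real. \<mu> \<ge> 1 \<and> \<kappa> < 1 \<and>
        (\<forall>\<omega>\<in>words B \<mu>. \<forall>x\<in>closure H. \<forall>y\<in>closure H.
           \<bar>theta_word \<theta> \<omega> x - theta_word \<theta> \<omega> y\<bar> \<le> \<kappa> * \<bar>x - y\<bar>)"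
    and s_pos: "s > 0"
    and v_Cm: "Cm_closure m H v Dv"
    and v_pos: "\<forall>x\<in>closure H. v x > 0"
    and v_eig: "\<forall>x\<in>closure H. (\<Sum>\<beta>\<in>B. b \<beta> x powr s * v (\<theta> \<beta> x)) = lam * v x"
  defines "C1 \<equiv> Sup {\<bar>Db \<beta> 1 x\<bar> / b \<beta> x | \<beta> x. \<beta> \<in> B \<and> x \<in> H}"
    and "C2 \<equiv> Sup {\<bar>Db \<beta> 2 x\<bar> / b \<beta> x | \<beta> x. \<beta> \<in> B \<and> x \<in> H}"
    and "M0 \<equiv> Sup {\<bar>D\<theta> \<beta> 2 x\<bar> | \<beta> x. \<beta> \<in> B \<and> x \<in> closure H}"
    and "S1 \<equiv> (\<Sum>k. eps_seq B \<theta> H k)"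
    and "S2 \<equiv> (\<Sum>k. (eps_seq B \<theta> H k)\<^sup>2)"
  shows "\<forall>x\<in>closure H.
           Dv 2 x / v x \<le> s\<^sup>2 * C1\<^sup>2 * S1\<^sup>2 + s * S2 * (C2 + C1 * M0 * S1)
         \<and> Dv 2 x / v x \<ge> - s * S2 * ((C2 + C1\<^sup>2) + C1 * M0 * S1)"
proof -
  interpret eigenfunction_problem n m c d H B b \<theta> Db D\<theta> s lam v Dv
    by unfold_locales (fact assms)+
  show ?thesis
    unfolding C1_def C2_def M0_def S1_def S2_def using second_ratio_bounds by simp
qed

end
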